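(* Consider the MTGC algorithm described in the context. Suppose (A1) and (A2) hold and $\gamma\le\frac1{10EHL}$. Then for every global round $t$, $$D_t\le24\gamma^2E^2H^2L^2Q_t+12\gamma^2E^2H^2\sum_{e=0}^{E-1}\frac1N\sum_{j=1}^NY_j^{t,e}+3\gamma^2E^3H\frac{N-1}{N^2}\sum_{j=1}^N\frac1{n_j}\sigma^2.$$
   Context: Setting: $N$ groups; group $j$ has a set $\mathcal C_j$ of $n_j\ge1$ clients, sets pairwise disjoint. Client $i$ has distribution $\mathcal D_i$, stochastic loss $F_i(\boldsymbol x,\xi)$, $F_i(\boldsymbol x)=\mathbb E_{\xi\sim\mathcal D_i}F_i(\boldsymbol x,\xi)$; $f_j=\frac1{n_j}\sum_{i\in\mathcal C_j}F_i$, $f=\frac1N\sum_jf_j$. For client $i$, $j$ denotes its group. (A1): $\|\nabla F_i(\boldsymbol x)-\nabla F_i(\boldsymbol y)\|\le L\|\boldsymbol x-\boldsymbol y\|$ for all $\boldsymbol x,\boldsymbol y,i$. (A2): $\mathbb E_{\xi\sim\mathcal D_i}\nabla F_i(\boldsymbol x,\xi)=\nabla F_i(\boldsymbol x)$ and $\mathbb E_{\xi\sim\mathcal D_i}\|\nabla F_i(\boldsymbol x,\xi)-\nabla F_i(\boldsymbol x)\|^2\le\sigma^2$ for all $\boldsymbol x,i$. MTGC: initial $\bar{\boldsymbol x}^0$, integers $E,H\ge1$, $\gamma>0$; samples $\xi_{i,h}^{t,e}\sim\mathcal D_i$ fresh and independent of the past. $\boldsymbol y_j^0=-\frac1{n_j}\sum_{i\in\mathcal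 C_j}\nabla F_i(\bar{\boldsymbol x}^0,\xi_{i,0}^{0,0})+\frac1N\sum_{j'}\frac1{n_{j'}}\sum_{i\in\mathcal C_{j'}}\nabla F_i(\bar{\boldsymbol x}^0,\xi_{i,0}^{0,0})$. For each $t\ge0$: $\bar{\boldsymbol x}_j^{t,0}=\bar{\boldsymbol x}^t$; $\boldsymbol z_i^{t,0}=-\nabla F_i(\bar{\boldsymbol x}^t,\xi_{i,0}^{t,0})+\frac1{n_j}\sum_{i'\in\mathcal C_j}\nabla F_{i'}(\bar{\boldsymbol x}^t,\xi_{i',0}^{t,0})$; for $e=0,\dots,E-1$: $\boldsymbol x_{i,0}^{t,e}=\bar{\boldsymbol x}_j^{t,e}$, $\boldsymbol x_{i,h+1}^{t,e}=\boldsymbol x_{i,h}^{t,e}-\gamma(\nabla F_i(\boldsymbol x_{i,h}^{t,e},\xi_{i,h}^{t,e})+\boldsymbol z_i^{t,e}+\boldsymbol y_j^t)$ for $h=0,\dots,H-1$, $\bar{\boldsymbol x}_j^{t,e+1}=\frac1{n_j}\sum_{i\in\mathcal C_j}\boldsymbol x_{i,H}^{t,e}$, $\boldsymbol z_i^{t,e+1}=\boldsymbol z_i^{t,e}+\frac1{H\gamma}(\boldsymbol x_{i,H}^{t,e}-\bar{\boldsymbol x}_j^{t,e+1})$; then $\bar{\boldsymbol x}^{t+1}=\frac1N\sum_j\bar{\boldsymbol x}_j^{t,E}$, $\boldsymbol y_j^{t+1}=\boldsymbol y_j^t+\frac1{HE\gamma}(\bar{\boldsymbol x}_j^{t,E}-\bar{\boldsymbol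 x}^{t+1})$. $\mathbb E$ is over all randomness. Notation: $\hat{\boldsymbol x}^{t,e}=\frac1N\sum_j\bar{\boldsymbol x}_j^{t,e}$; $Y_j^{t,e}=\mathbb E\|\boldsymbol y_j^t+\nabla f_j(\hat{\boldsymbol x}^{t,e})-\nabla f(\hat{\boldsymbol x}^{t,e})\|^2$; $D_t=\sum_{e=0}^{E-1}\frac1N\sum_j\mathbb E\|\hat{\boldsymbol x}^{t,e}-\bar{\boldsymbol x}_j^{t,e}\|^2$; $Q_t=\sum_{e=0}^{E-1}\frac1{NH}\sum_j\frac1{n_j}\sum_{i\in\mathcal C_j}\sum_{h=0}^{H-1}\mathbb E\|\bar{\boldsymbol x}_j^{t,e}-\boldsymbol x_{i,h}^{t,e}\|^2$. *)

theory Defs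
  imports "HOL-Probability.Probability"
begin

text \<open>Deterministic description of MTGC, given a sample path
  w t e i h (the sample xi_{i,h}^{t,e}) and the stochastic gradient oracle
  g i x s (= nabla F_i(x,s)).
  Client-level quantities are indexed by the pair (j, i) with i in C j.\<close>

definition avg :: "'c set \<Rightarrow> ('c \<Rightarrow> 'a::real_vector) \<Rightarrow> 'a" where
  "avg A f = (1 / real (card A)) *\<^sub>R (\<Sum>i\<in>A. f i)"

text \<open>Local steps: loc ... h = x_{i,h}^{t,e}, started from x0 = xbar_j^{t,e}.\<close>
fun mtgc_loc :: "('c \<Rightarrow> 'a::real_vector \<Rightarrow> 'b \<Rightarrow> 'a) \<Rightarrow> real
    \<Rightarrow> (nat \<Rightarrow> nat \<Rightarrow> 'c \<Rightarrow> nat \<Rightarrow> 'b) \<Rightarrow> nat \<Rightarrow> nat \<Rightarrow> 'c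
    \<Rightarrow> 'a \<Rightarrow> 'a \<Rightarrow> 'a \<Rightarrow> nat \<Rightarrow> 'a" where
  "mtgc_loc g \<gamma> w t e i zi yj x0 0 = x0"
| "mtgc_loc g \<gamma> w t e i zi yj x0 (Suc h) =
     (let x = mtgc_loc g \<gamma> w t e i zi yj x0 h
      in x - \<gamma> *\<^sub>R (g i x (w t e i h) + zi + yj))"

text \<open>Inner (group) rounds within global round t, starting from xb = xbar^t and
  y = (y_j^t)_j: returns (xbar_j^{t,e})_j and (z_i^{t,e})_{j,i}.\<close>
fun mtgc_inner :: "('c \<Rightarrow> 'a::real_vector \<Rightarrow> 'b \<Rightarrow> 'a) \<Rightarrow> real \<Rightarrow> (nat \<Rightarrow> 'c set)
    \<Rightarrow> nat \<Rightarrow> (nat \<Rightarrow> nat \<Rightarrow> 'c \<Rightarrow> nat \<Rightarrow> 'b) \<Rightarrow> nat \<Rightarrow> 'a \<Rightarrow> (nat \<Rightarrow> 'a)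
    \<Rightarrow> nat \<Rightarrow> (nat \<Rightarrow> 'a) \<times> (nat \<Rightarrow> 'c \<Rightarrow> 'a)" where
  "mtgc_inner g \<gamma> C H w t xb y 0 =
     ((\<lambda>j. xb),
      (\<lambda>j i. - g i xb (w t 0 i 0) + avg (C j) (\<lambda>i'. g i' xb (w t 0 i' 0))))"
| "mtgc_inner g \<gamma> C H w t xb y (Suc e) =
     (let (xj, z) = mtgc_inner g \<gamma> C H w t xb y e;
          xH = (\<lambda>j i. mtgc_loc g \<gamma> w t e i (z j i) (y j) (xj j) H);
          xj' = (\<lambda>j. avg (C j) (xH j));
          z' = (\<lambda>j i. z j i + (1 / (real H * \<gamma>)) *\<^sub>R (xH j i - xj' j))
      in (xj', z'))"

text \<open>Global rounds: returns (xbar^t, (y_j^t)_j).\<close>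
fun mtgc_round :: "('c \<Rightarrow> 'a::real_vector \<Rightarrow> 'b \<Rightarrow> 'a) \<Rightarrow> real \<Rightarrow> (nat \<Rightarrow> 'c set)
    \<Rightarrow> nat \<Rightarrow> nat \<Rightarrow> nat \<Rightarrow> 'a \<Rightarrow> (nat \<Rightarrow> nat \<Rightarrow> 'c \<Rightarrow> nat \<Rightarrow> 'b) \<Rightarrow> nat
    \<Rightarrow> 'a \<times> (nat \<Rightarrow> 'a)" where
  "mtgc_round g \<gamma> C N E H x0 w 0 =
     (x0, (\<lambda>j. - avg (C j) (\<lambda>i. g i x0 (w 0 0 i 0))
              + (1 / real N) *\<^sub>R (\<Sum>j'<N. avg (C j') (\<lambda>i. g i x0 (w 0 0 i 0)))))"
| "mtgc_round g \<gamma> C N E H x0 w (Suc t) =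
     (let (xb, y) = mtgc_round g \<gamma> C N E H x0 w t;
          xj = fst (mtgc_inner g \<gamma> C H w t xb y E);
          xb' = (1 / real N) *\<^sub>R (\<Sum>j<N. xj j);
          y' = (\<lambda>j. y j + (1 / (real H * real E * \<gamma>)) *\<^sub>R (xj j - xb'))
      in (xb', y'))"

definition mtgc_xbar where "mtgc_xbar g \<gamma> C N E H x0 w t = fst (mtgc_round g \<gamma> C N E H x0 w t)"
definition mtgc_y where "mtgc_y g \<gamma> C N E H x0 w t j = snd (mtgc_round g \<gamma> C N E H x0 w t) j"

definition mtgc_xbj where
  "mtgc_xbj g \<gamma> C N E H x0 w t e j =
     fst (mtgc_inner g \<gamma> C H w t (mtgc_xbar g \<gamma> C N E H x0 w t) (mtgc_y g \<gamma> C N E H x0 w t) e) j"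

definition mtgc_z where
  "mtgc_z g \<gamma> C N E H x0 w t e j i =
     snd (mtgc_inner g \<gamma> C H w t (mtgc_xbar g \<gamma> C N E H x0 w t) (mtgc_y g \<gamma> C N E H x0 w t) e) j i"

definition mtgc_x where
  "mtgc_x g \<gamma> C N E H x0 w t e j i h =
     mtgc_loc g \<gamma> w t e i (mtgc_z g \<gamma> C N E H x0 w t e j i) (mtgc_y g \<gamma> C N E H x0 w t j)
        (mtgc_xbj g \<gamma> C N E H x0 w t e j) h"

definition mtgc_xhat where
  "mtgc_xhat g \<gamma> C N E H x0 w t e = (1 / real N) *\<^sub>R (\<Sum>j<N. mtgc_xbj g \<gamma> C N E H x0 w t e j)"

end

theory Submission
  imports Defs
begin

text \<open>Unrolling the updates, and using that the client corrections sum to zero within each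
  group and the group corrections sum to zero across groups, the deviation hat x^{t,e} - bar x_j^{t,e}
  is gamma times the sum, over the eH earlier local steps, of the centred group gradient plus y_j^t.
  Each group gradient splits into sampling noise, client drift and group deviation (both
  controlled by (A1)), and the corrected full gradient at hat x^{t,e}. Squaring with
  (a+b+c+d)^2 <= 4(a^2+b^2+c^2+d^2) and Cauchy-Schwarz over the steps gives a pathwise recursion
  for the consensus error. The noise terms are martingale differences -- each sample is
  independent of everything computed before it -- so they are orthogonal in L^2 and contribute
  only their variances, at most eH (N-1)/N^2 sum_j sigma^2/n_j. Summing the recursion over e and
  absorbing the consensus term on the right via 2 gamma^2 E^2 H^2 L^2 <= 1/50 gives the bound.\<close>

lemma norm_sum_squared_le:
  fixes v :: "'k \<Rightarrow> 'a::real_normed_vector"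
  shows "(norm (\<Sum>k\<in>K. v k))\<^sup>2 \<le> real (card K) * (\<Sum>k\<in>K. (norm (v k))\<^sup>2)"
proof -
  have "(norm (\<Sum>k\<in>K. v k))\<^sup>2 \<le> (\<Sum>k\<in>K. norm (v k))\<^sup>2"
    by (rule power_mono[OF norm_sum]) simp
  also have "\<dots> \<le> (\<Sum>k\<in>K. (norm (v k))\<^sup>2) * card K"
    by (rule sum_squared_le_sum_of_squares)
  finally show ?thesis by (simp add: mult.commute)
qed

lemma norm_add4_squared_le:
  fixes a b c d :: "'a::real_normed_vector"
  shows "(norm (a + b + c + d))\<^sup>2 \<le> 4 * ((norm a)\<^sup>2 + (norm b)\<^sup>2 + (norm c)\<^sup>2 + (norm d)\<^sup>2)"
  using norm_sum_squared_le[of "\<lambda>k. [a, b, c, d] ! k" "{..<4}"]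
  by (simp add: numeral_eq_Suc lessThan_Suc ac_simps)

lemma abs_inner_le_norm_squares:
  fixes a b :: "'a::real_inner"
  shows "\<bar>inner a b\<bar> \<le> (norm a)\<^sup>2 + (norm b)\<^sup>2"
proof -
  have "2 * (norm a * norm b) \<le> (norm a)\<^sup>2 + (norm b)\<^sup>2"
    using sum_squares_bound[of "norm a" "norm b"] by (simp add: power2_eq_square)
  then show ?thesis
    using Cauchy_Schwarz_ineq2[of a b] zero_le_mult_iff[of "norm a" "norm b"] by linarith
qed

lemma sum_norm_squared_centered_le:
  fixes v :: "'k \<Rightarrow> 'a::real_inner"
  assumes "finite A"
  shows "(\<Sum>j\<in>A. (norm (v j - (1 / real (card A)) *\<^sub>R (\<Sum>j'\<in>A. v j')))\<^sup>2) \<le> (\<Sum>j\<in>A. (norm (v j))\<^sup>2)"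
proof (cases "A = {}")
  case False
  define n where "n = real (card A)"
  have n_pos: "n > 0" using False assms by (simp add: n_def card_gt_0_iff)
  define m where "m = (1 / n) *\<^sub>R (\<Sum>j\<in>A. v j)"
  have sum_v: "(\<Sum>j\<in>A. v j) = n *\<^sub>R m" using n_pos by (simp add: m_def)
  have "(\<Sum>j\<in>A. (norm (v j - m))\<^sup>2) = (\<Sum>j\<in>A. (norm (v j))\<^sup>2 - 2 * inner (v j) m + (norm m)\<^sup>2)"
  proof (intro sum.cong refl)
    fix j
    show "(norm (v j - m))\<^sup>2 = (norm (v j))\<^sup>2 - 2 * inner (v j) m + (norm m)\<^sup>2"
      using dot_norm_neg[of "v j" m] by simp
  qed
  also have "\<dots> = (\<Sum>j\<in>A. (norm (v j))\<^sup>2) - 2 * inner (\<Sum>j\<in>A. v j) m + n * (norm m)\<^sup>2"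
    by (simp add: sum.distrib sum_subtractf inner_sum_left sum_distrib_left n_def)
  also have "\<dots> = (\<Sum>j\<in>A. (norm (v j))\<^sup>2) - n * (norm m)\<^sup>2"
    by (simp add: sum_v power2_norm_eq_inner)
  also have "\<dots> \<le> (\<Sum>j\<in>A. (norm (v j))\<^sup>2)" using n_pos by simp
  finally show ?thesis unfolding m_def n_def .
qed simp

lemma avg_add: "avg A (\<lambda>i. f i + g i) = avg A f + avg A g"
  by (simp add: avg_def sum.distrib scaleR_add_right)

lemma avg_diff: "avg A (\<lambda>i. f i - g i) = avg A f - avg A g"
  by (simp add: avg_def sum_subtractf scaleR_diff_right)

lemma sum_diff_avg_eq_0: "(\<Sum>i\<in>A. f i - avg A f) = 0"
  by (cases "finite A") (auto simp: sum_subtractf avg_def sum_constant_scaleR)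

lemma norm_avg_squared_le:
  fixes f :: "'k \<Rightarrow> 'a::real_normed_vector"
  shows "(norm (avg A f))\<^sup>2 \<le> (1 / real (card A)) * (\<Sum>i\<in>A. (norm (f i))\<^sup>2)"
proof -
  have "(norm (avg A f))\<^sup>2 = (1 / real (card A))\<^sup>2 * (norm (\<Sum>i\<in>A. f i))\<^sup>2"
    by (simp add: avg_def power_mult_distrib power_divide)
  also have "\<dots> \<le> (1 / real (card A))\<^sup>2 * (real (card A) * (\<Sum>i\<in>A. (norm (f i))\<^sup>2))"
    by (rule mult_left_mono[OF norm_sum_squared_le]) simp
  also have "\<dots> = (1 / real (card A)) * (\<Sum>i\<in>A. (norm (f i))\<^sup>2)"
    by (cases "card A = 0") (simp_all add: power2_eq_square)
  finally show ?thesis .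
qed

lemma norm_avg_lipschitz_diff_squared_le:
  fixes F :: "'c \<Rightarrow> 'a::real_normed_vector \<Rightarrow> 'b::real_normed_vector"
  assumes lip: "\<And>i. i \<in> A \<Longrightarrow> norm (F i (u i) - F i (v i)) \<le> L * norm (u i - v i)"
  shows "(norm (avg A (\<lambda>i. F i (u i) - F i (v i))))\<^sup>2
           \<le> L\<^sup>2 * ((1 / real (card A)) * (\<Sum>i\<in>A. (norm (u i - v i))\<^sup>2))"
proof -
  have "(norm (F i (u i) - F i (v i)))\<^sup>2 \<le> L\<^sup>2 * (norm (u i - v i))\<^sup>2" if "i \<in> A" for i
    using power_mono[OF lip[OF that] norm_ge_zero] by (simp add: power_mult_distrib)
  then have "(1 / real (card A)) * (\<Sum>i\<in>A. (norm (F i (u i) - F i (v i)))\<^sup>2)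
               \<le> (1 / real (card A)) * (\<Sum>i\<in>A. L\<^sup>2 * (norm (u i - v i))\<^sup>2)"
    by (intro mult_left_mono sum_mono) auto
  with norm_avg_squared_le[of A "\<lambda>i. F i (u i) - F i (v i)"] show ?thesis
    by (simp add: sum_distrib_left algebra_simps)
qed

section \<open>Unrolling the MTGC recursion\<close>

lemma mtgc_inner_Suc_fst:
  "fst (mtgc_inner g \<gamma> C H w t xb y (Suc e)) j =
     avg (C j) (\<lambda>i. mtgc_loc g \<gamma> w t e i (snd (mtgc_inner g \<gamma> C H w t xb y e) j i) (y j)
        (fst (mtgc_inner g \<gamma> C H w t xb y e) j) H)"
  by (simp add: Let_def split_beta)

lemma mtgc_inner_Suc_snd:
  "snd (mtgc_inner g \<gamma> C H w t xb y (Suc e)) j i =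
     snd (mtgc_inner g \<gamma> C H w t xb y e) j i + (1 / (real H * \<gamma>)) *\<^sub>R
       (mtgc_loc g \<gamma> w t e i (snd (mtgc_inner g \<gamma> C H w t xb y e) j i) (y j)
          (fst (mtgc_inner g \<gamma> C H w t xb y e) j) H - fst (mtgc_inner g \<gamma> C H w t xb y (Suc e)) j)"
  by (simp add: Let_def split_beta)

lemma mtgc_round_Suc_fst:
  "fst (mtgc_round g \<gamma> C N E H x0 w (Suc t)) =
     (1 / real N) *\<^sub>R (\<Sum>j<N. fst (mtgc_inner g \<gamma> C H w t (fst (mtgc_round g \<gamma> C N E H x0 w t))
                                (snd (mtgc_round g \<gamma> C N E H x0 w t)) E) j)"
  by (simp add: Let_def split_beta)

lemma mtgc_round_Suc_snd:
  "snd (mtgc_round g \<gamma> C N E H x0 w (Suc t)) j =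
     snd (mtgc_round g \<gamma> C N E H x0 w t) j + (1 / (real H * real E * \<gamma>)) *\<^sub>R
      (fst (mtgc_inner g \<gamma> C H w t (fst (mtgc_round g \<gamma> C N E H x0 w t))
             (snd (mtgc_round g \<gamma> C N E H x0 w t)) E) j
        - fst (mtgc_round g \<gamma> C N E H x0 w (Suc t)))"
  by (simp add: Let_def split_beta)

lemma mtgc_loc_eq_sum:
  "mtgc_loc g \<gamma> w t e i zi yj x0 n =
     x0 - \<gamma> *\<^sub>R (\<Sum>h<n. g i (mtgc_loc g \<gamma> w t e i zi yj x0 h) (w t e i h) + zi + yj)"
  by (induction n) (simp_all add: Let_def algebra_simps)

lemma sum_mtgc_inner_snd_eq_0: "(\<Sum>i\<in>C j. snd (mtgc_inner g \<gamma> C H w t xb y e) j i) = 0"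
proof (induction e)
  case 0
  then show ?case
    using sum_diff_avg_eq_0[of "\<lambda>i. g i xb (w t 0 i 0)" "C j"]
    by (simp add: sum_subtractf)
next
  case (Suc e)
  let ?xH = "\<lambda>i. mtgc_loc g \<gamma> w t e i (snd (mtgc_inner g \<gamma> C H w t xb y e) j i) (y j)
      (fst (mtgc_inner g \<gamma> C H w t xb y e) j) H"
  from Suc show ?case
    using sum_diff_avg_eq_0[of ?xH]
    by (simp only: mtgc_inner_Suc_snd sum.distrib mtgc_inner_Suc_fst flip: scaleR_right.sum) simp
qed

lemma sum_mtgc_round_snd_eq_0:
  assumes "N \<ge> 1"
  shows "(\<Sum>j<N. snd (mtgc_round g \<gamma> C N E H x0 w t) j) = 0"
proof (induction t)
  case 0
  then show ?case using assms by (simp add: sum.distrib sum_negf sum_constant_scaleR sum_subtractf)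
next
  case (Suc t)
  then show ?case
    using assms
    by (simp only: mtgc_round_Suc_snd sum.distrib mtgc_round_Suc_fst sum_subtractf
        flip: scaleR_right.sum) (simp add: sum_constant_scaleR)
qed

lemma avg_local_update:
  fixes a :: "'c \<Rightarrow> nat \<Rightarrow> 'a::real_vector"
  assumes "finite A" "A \<noteq> {}" "(\<Sum>i\<in>A. z i) = 0"
  shows "avg A (\<lambda>i. c - \<gamma> *\<^sub>R (\<Sum>h<n. a i h + z i + y)) = c - \<gamma> *\<^sub>R (\<Sum>h<n. avg A (\<lambda>i. a i h) + y)"
proof -
  have card_pos: "real (card A) > 0" using assms by (simp add: card_gt_0_iff)
  have "(\<Sum>i\<in>A. c - \<gamma> *\<^sub>R (\<Sum>h<n. a i h + z i + y)) =
        real (card A) *\<^sub>R c - \<gamma> *\<^sub>R ((\<Sum>h<n. \<Sum>i\<in>A. a i h) + real n *\<^sub>R (\<Sum>i\<in>A. z i)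
          + (real (card A) * real n) *\<^sub>R y)"
    by (simp add: sum_subtractf sum.distrib sum_constant_scaleR flip: scaleR_right.sum)
       (simp add: sum.swap[of _ A] scaleR_right.sum)
  then show ?thesis
    unfolding avg_def using assms(3) card_pos
    by (simp add: sum.distrib sum_constant_scaleR scaleR_right.sum scaleR_right_diff_distrib
        scaleR_add_right)
qed

definition mtgc_group_grad where
  "mtgc_group_grad g \<gamma> C N E H x0 W t e h j =
     avg (C j) (\<lambda>i. g i (mtgc_x g \<gamma> C N E H x0 W t e j i h) (W t e i h))"

lemma mtgc_xbj_Suc:
  assumes "finite (C j)" "C j \<noteq> {}"
  shows "mtgc_xbj g \<gamma> C N E H x0 W t (Suc e) j = mtgc_xbj g \<gamma> C N E H x0 W t e j
     - \<gamma> *\<^sub>R (\<Sum>h<H. mtgc_group_grad g \<gamma> C N E H x0 W t e h j + mtgc_y g \<gamma> C N E H x0 W t j)"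
proof -
  have "mtgc_xbj g \<gamma> C N E H x0 W t (Suc e) j = avg (C j) (\<lambda>i. mtgc_x g \<gamma> C N E H x0 W t e j i H)"
    unfolding mtgc_xbj_def mtgc_x_def mtgc_z_def mtgc_y_def mtgc_inner_Suc_fst by simp
  also have "\<dots> = avg (C j) (\<lambda>i. mtgc_xbj g \<gamma> C N E H x0 W t e j
      - \<gamma> *\<^sub>R (\<Sum>h<H. g i (mtgc_x g \<gamma> C N E H x0 W t e j i h) (W t e i h)
                     + mtgc_z g \<gamma> C N E H x0 W t e j i + mtgc_y g \<gamma> C N E H x0 W t j))"
    unfolding mtgc_x_def by (subst mtgc_loc_eq_sum) simp
  also have "\<dots> = mtgc_xbj g \<gamma> C N E H x0 W t e j
     - \<gamma> *\<^sub>R (\<Sum>h<H. mtgc_group_grad g \<gamma> C N E H x0 W t e h j + mtgc_y g \<gamma> C N E H x0 W t j)"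
    unfolding mtgc_group_grad_def
    by (rule avg_local_update[OF assms]) (simp add: mtgc_z_def sum_mtgc_inner_snd_eq_0)
  finally show ?thesis .
qed

lemma mtgc_xhat_Suc:
  assumes "N \<ge> 1" and groups: "\<And>j. j < N \<Longrightarrow> finite (C j) \<and> C j \<noteq> {}"
  shows "mtgc_xhat g \<gamma> C N E H x0 W t (Suc e) = mtgc_xhat g \<gamma> C N E H x0 W t e
     - \<gamma> *\<^sub>R (\<Sum>h<H. (1 / real N) *\<^sub>R (\<Sum>j<N. mtgc_group_grad g \<gamma> C N E H x0 W t e h j))"
proof -
  let ?y = "mtgc_y g \<gamma> C N E H x0 W t"
  have "(\<Sum>j<N. ?y j) = 0"
    unfolding mtgc_y_def by (rule sum_mtgc_round_snd_eq_0[OF assms(1)])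
  then have "(\<Sum>j<N. \<Sum>h<H. ?y j) = 0"
    by (simp add: sum_constant_scaleR flip: scaleR_right.sum)
  with groups show ?thesis
    unfolding mtgc_xhat_def
    by (simp add: mtgc_xbj_Suc sum_subtractf sum.distrib scaleR_right_diff_distrib scaleR_right.sum
        sum.swap[of _ "{..<N}"] flip: scaleR_right.sum)
qed

text \<open>The client corrections \<open>z\<^sub>i\<close> sum to zero within each group and the group corrections
  \<open>y\<^sub>j\<close> sum to zero, so only the centred group gradients and \<open>y\<^sub>j\<close> move a group away from the
  global average.\<close>
lemma mtgc_xhat_minus_xbj:
  assumes "N \<ge> 1" and groups: "\<And>j. j < N \<Longrightarrow> finite (C j) \<and> C j \<noteq> {}" and "j < N"
  shows "mtgc_xhat g \<gamma> C N E H x0 W t e - mtgc_xbj g \<gamma> C N E H x0 W t e j =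
    \<gamma> *\<^sub>R (\<Sum>e'<e. \<Sum>h<H. mtgc_group_grad g \<gamma> C N E H x0 W t e' h j
        - (1 / real N) *\<^sub>R (\<Sum>j'<N. mtgc_group_grad g \<gamma> C N E H x0 W t e' h j')
        + mtgc_y g \<gamma> C N E H x0 W t j)"
proof (induction e)
  case 0
  then show ?case
    using assms(1) by (simp add: mtgc_xhat_def mtgc_xbj_def sum_constant_scaleR)
next
  case (Suc e)
  have Cj: "finite (C j)" "C j \<noteq> {}" using groups[OF \<open>j < N\<close>] by auto
  have "mtgc_xhat g \<gamma> C N E H x0 W t (Suc e) - mtgc_xbj g \<gamma> C N E H x0 W t (Suc e) j
     = (mtgc_xhat g \<gamma> C N E H x0 W t e - mtgc_xbj g \<gamma> C N E H x0 W t e j)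
       + \<gamma> *\<^sub>R (\<Sum>h<H. mtgc_group_grad g \<gamma> C N E H x0 W t e h j
           - (1 / real N) *\<^sub>R (\<Sum>j'<N. mtgc_group_grad g \<gamma> C N E H x0 W t e h j')
           + mtgc_y g \<gamma> C N E H x0 W t j)"
    using mtgc_xhat_Suc[OF assms(1) groups]
    unfolding mtgc_xbj_Suc[of C j, OF Cj]
    by (simp add: algebra_simps sum_subtractf sum.distrib)
  then show ?case
    unfolding Suc.IH by (simp add: scaleR_add_right)
qed

section \<open>A pathwise bound on the consensus error\<close>

lemma norm_add_sum3_squared_le:
  fixes a :: "'a::real_normed_vector" and b c d :: "'k \<Rightarrow> 'a"
  shows "(norm (a + (\<Sum>k\<in>K. b k + c k + d k)))\<^sup>2 \<le> 4 * (norm a)\<^sup>2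
           + 4 * real (card K) * (\<Sum>k\<in>K. (norm (b k))\<^sup>2 + (norm (c k))\<^sup>2 + (norm (d k))\<^sup>2)"
proof -
  have "(norm (a + (\<Sum>k\<in>K. b k + c k + d k)))\<^sup>2
          = (norm (a + sum b K + sum c K + sum d K))\<^sup>2"
    by (simp add: sum.distrib add.assoc)
  also have "\<dots> \<le> 4 * ((norm a)\<^sup>2 + (norm (sum b K))\<^sup>2 + (norm (sum c K))\<^sup>2 + (norm (sum d K))\<^sup>2)"
    by (rule norm_add4_squared_le)
  also have "\<dots> \<le> 4 * ((norm a)\<^sup>2 + real (card K) * (\<Sum>k\<in>K. (norm (b k))\<^sup>2)
      + real (card K) * (\<Sum>k\<in>K. (norm (c k))\<^sup>2) + real (card K) * (\<Sum>k\<in>K. (norm (d k))\<^sup>2))"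
    by (intro mult_left_mono add_mono order_refl norm_sum_squared_le) simp
  finally show ?thesis by (simp add: sum.distrib algebra_simps)
qed

text \<open>The noise part \<open>\<nu>\<close> is kept as a whole, because its cross terms vanish only in
  expectation; the other three parts are estimated term by term.\<close>
lemma mean_norm_squared_centered_sum_le:
  fixes \<nu> q r f G :: "'k \<Rightarrow> nat \<Rightarrow> 'a::real_inner" and y \<Delta> :: "nat \<Rightarrow> 'a"
  assumes "finite K"
    and \<Delta>: "\<And>j. j < N \<Longrightarrow> \<Delta> j = \<gamma> *\<^sub>R (\<Sum>k\<in>K. G k j - (1 / real N) *\<^sub>R (\<Sum>j'<N. G k j') + y j)"
    and G: "\<And>k j. k \<in> K \<Longrightarrow> j < N \<Longrightarrow> G k j = \<nu> k j + q k j + r k j + f k j"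
  shows "(1 / real N) * (\<Sum>j<N. (norm (\<Delta> j))\<^sup>2) \<le>
     4 * \<gamma>\<^sup>2 * ((1 / real N) * (\<Sum>j<N. (norm (\<Sum>k\<in>K. \<nu> k j - (1 / real N) *\<^sub>R (\<Sum>j'<N. \<nu> k j')))\<^sup>2))
     + 4 * \<gamma>\<^sup>2 * real (card K) * (\<Sum>k\<in>K. (1 / real N) * (\<Sum>j<N. (norm (q k j))\<^sup>2 + (norm (r k j))\<^sup>2
          + (norm (y j + f k j - (1 / real N) *\<^sub>R (\<Sum>j'<N. f k j')))\<^sup>2))"
proof -
  define av where "av v = (1 / real N) *\<^sub>R (\<Sum>j'<N. v j')" for v :: "nat \<Rightarrow> 'a"
  define A where "A j = (\<Sum>k\<in>K. \<nu> k j - av (\<nu> k))" for j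
  have "\<Delta> j = \<gamma> *\<^sub>R (A j + (\<Sum>k\<in>K. (q k j - av (q k)) + (r k j - av (r k)) + (y j + f k j - av (f k))))"
    if "j < N" for j
  proof -
    have "av (G k) = av (\<nu> k) + av (q k) + av (r k) + av (f k)" if "k \<in> K" for k
      using G[OF that] by (simp add: av_def sum.distrib scaleR_add_right)
    then show ?thesis
      unfolding \<Delta>[OF that] av_def[symmetric] A_def sum.distrib[symmetric]
      by (intro arg_cong[where f="scaleR \<gamma>"] sum.cong refl) (simp add: G that algebra_simps)
  qed
  then have "(norm (\<Delta> j))\<^sup>2 \<le> \<gamma>\<^sup>2 * (4 * (norm (A j))\<^sup>2 + 4 * real (card K) *
     (\<Sum>k\<in>K. (norm (q k j - av (q k)))\<^sup>2 + (norm (r k j - av (r k)))\<^sup>2 + (norm (y j + f k j - av (f k)))\<^sup>2))"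
    if "j < N" for j
    using that by (simp add: power_mult_distrib mult_left_mono norm_add_sum3_squared_le)
  then have "(\<Sum>j<N. (norm (\<Delta> j))\<^sup>2) \<le> (\<Sum>j<N. \<gamma>\<^sup>2 * (4 * (norm (A j))\<^sup>2 + 4 * real (card K) *
     (\<Sum>k\<in>K. (norm (q k j - av (q k)))\<^sup>2 + (norm (r k j - av (r k)))\<^sup>2 + (norm (y j + f k j - av (f k)))\<^sup>2)))"
    by (intro sum_mono) simp
  also have "\<dots> = 4 * \<gamma>\<^sup>2 * (\<Sum>j<N. (norm (A j))\<^sup>2) + 4 * \<gamma>\<^sup>2 * real (card K) *
     (\<Sum>k\<in>K. (\<Sum>j<N. (norm (q k j - av (q k)))\<^sup>2) + (\<Sum>j<N. (norm (r k j - av (r k)))\<^sup>2)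
        + (\<Sum>j<N. (norm (y j + f k j - av (f k)))\<^sup>2))"
    by (simp add: sum.distrib sum_distrib_left sum.swap[of _ "{..<N}" K] algebra_simps)
  also have "\<dots> \<le> 4 * \<gamma>\<^sup>2 * (\<Sum>j<N. (norm (A j))\<^sup>2) + 4 * \<gamma>\<^sup>2 * real (card K) *
     (\<Sum>k\<in>K. (\<Sum>j<N. (norm (q k j))\<^sup>2) + (\<Sum>j<N. (norm (r k j))\<^sup>2)
        + (\<Sum>j<N. (norm (y j + f k j - av (f k)))\<^sup>2))"
    using sum_norm_squared_centered_le[of "{..<N}"]
    by (intro add_mono order_refl mult_left_mono sum_mono[of K]) (simp_all add: av_def)
  finally have "(1 / real N) * (\<Sum>j<N. (norm (\<Delta> j))\<^sup>2) \<le> (1 / real N) * (4 * \<gamma>\<^sup>2 * (\<Sum>j<N. (norm (A j))\<^sup>2)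
     + 4 * \<gamma>\<^sup>2 * real (card K) * (\<Sum>k\<in>K. (\<Sum>j<N. (norm (q k j))\<^sup>2) + (\<Sum>j<N. (norm (r k j))\<^sup>2)
        + (\<Sum>j<N. (norm (y j + f k j - av (f k)))\<^sup>2)))"
    by (rule mult_left_mono) simp
  then show ?thesis
    unfolding A_def av_def by (simp add: sum.distrib sum_distrib_left algebra_simps)
qed

locale mtgc_lipschitz =
  fixes gs :: "'c \<Rightarrow> 'a::real_inner \<Rightarrow> 'b \<Rightarrow> 'a" and gF :: "'c \<Rightarrow> 'a \<Rightarrow> 'a"
    and C :: "nat \<Rightarrow> 'c set" and N E H :: nat and \<gamma> L :: real and x0 :: 'a and t :: nat
  assumes N_pos: "N \<ge> 1"
    and C_fin: "\<And>j. j < N \<Longrightarrow> finite (C j)"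
    and C_ne: "\<And>j. j < N \<Longrightarrow> C j \<noteq> {}"
    and gF_lipschitz: "\<And>i x y. i \<in> (\<Union>j<N. C j) \<Longrightarrow> norm (gF i x - gF i y) \<le> L * norm (x - y)"
begin

text \<open>Along a sample path W: xc W e j i h is x_{i,h}^{t,e} for client i of group j,
  xg W e j is bar x_j^{t,e}, xh W e is hat x^{t,e} and yg W j is y_j^t. Summed over e, the
  expectations of consensus_err and drift_err are D_t and Q_t, and that of tracking_err is
  sum_e 1/N sum_j Y_j^{t,e}.\<close>

abbreviation "xc W e j i h \<equiv> mtgc_x gs \<gamma> C N E H x0 W t e j i h"
abbreviation "xg W e j \<equiv> mtgc_xbj gs \<gamma> C N E H x0 W t e j"
abbreviation "xh W e \<equiv> mtgc_xhat gs \<gamma> C N E H x0 W t e"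
abbreviation "yg W j \<equiv> mtgc_y gs \<gamma> C N E H x0 W t j"

definition "grad_f j x = avg (C j) (\<lambda>i. gF i x)"

definition "grad_noise W e h j i = gs i (xc W e j i h) (W t e i h) - gF i (xc W e j i h)"

definition "group_noise W e h j = avg (C j) (grad_noise W e h j)"

definition "consensus_err W e = (\<Sum>j<N. (1 / real N) * (norm (xh W e - xg W e j))\<^sup>2)"

definition "drift_err W e =
  (\<Sum>j<N. \<Sum>i\<in>C j. \<Sum>h<H. (1 / (real N * real H * real (card (C j)))) * (norm (xg W e j - xc W e j i h))\<^sup>2)"

definition "tracking_err W e =
  (\<Sum>j<N. (1 / real N) * (norm (yg W j + grad_f j (xh W e) - (1 / real N) *\<^sub>R (\<Sum>j'<N. grad_f j' (xh W e))))\<^sup>2)"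

definition "noise_err W e = (1 / real N) *
  (\<Sum>j<N. (norm (\<Sum>k\<in>{..<e} \<times> {..<H}. group_noise W (fst k) (snd k) j
                 - (1 / real N) *\<^sub>R (\<Sum>j'<N. group_noise W (fst k) (snd k) j')))\<^sup>2)"

lemma C_fin_ne: "j < N \<Longrightarrow> finite (C j) \<and> C j \<noteq> {}"
  using C_fin C_ne by blast

lemma gF_lipschitz_group: "j < N \<Longrightarrow> i \<in> C j \<Longrightarrow> norm (gF i x - gF i y) \<le> L * norm (x - y)"
  using gF_lipschitz by blast

lemma sum_client_drift_le:
  "(\<Sum>h<H. (1 / real N) * (\<Sum>j<N. (norm (avg (C j) (\<lambda>i. gF i (xc W e j i h) - gF i (xg W e j))))\<^sup>2))
     \<le> real H * (L\<^sup>2 * drift_err W e)"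
proof -
  have "(norm (avg (C j) (\<lambda>i. gF i (xc W e j i h) - gF i (xg W e j))))\<^sup>2
          \<le> (\<Sum>i\<in>C j. (L\<^sup>2 / real (card (C j))) * (norm (xg W e j - xc W e j i h))\<^sup>2)" if "j < N" for j h
    using norm_avg_lipschitz_diff_squared_le[where A="C j" and F=gF and L=L
        and u="\<lambda>i. xc W e j i h" and v="\<lambda>_. xg W e j"] gF_lipschitz_group[OF that]
    by (simp add: sum_distrib_left norm_minus_commute)
  then have "(\<Sum>h<H. (1 / real N) * (\<Sum>j<N. (norm (avg (C j) (\<lambda>i. gF i (xc W e j i h) - gF i (xg W e j))))\<^sup>2))
     \<le> (\<Sum>h<H. (1 / real N) * (\<Sum>j<N. \<Sum>i\<in>C j. (L\<^sup>2 / real (card (C j))) * (norm (xg W e j - xc W e j i h))\<^sup>2))"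
    by (intro sum_mono mult_left_mono) auto
  also have "\<dots> = real H * (L\<^sup>2 * drift_err W e)"
    unfolding drift_err_def sum_distrib_left
    by (subst sum.swap, subst (2) sum.swap) (auto intro!: sum.cong simp: sum.swap[of _ "C _"])
  finally show ?thesis .
qed

lemma sum_group_deviation_le:
  "(\<Sum>h<H. (1 / real N) * (\<Sum>j<N. (norm (avg (C j) (\<lambda>i. gF i (xg W e j) - gF i (xh W e))))\<^sup>2))
     \<le> real H * (L\<^sup>2 * consensus_err W e)"
proof -
  have "(norm (avg (C j) (\<lambda>i. gF i (xg W e j) - gF i (xh W e))))\<^sup>2 \<le> L\<^sup>2 * (norm (xh W e - xg W e j))\<^sup>2"
    if "j < N" for j
    using norm_avg_lipschitz_diff_squared_le[where A="C j" and F=gF and L=L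
        and u="\<lambda>_. xg W e j" and v="\<lambda>_. xh W e"] C_fin_ne[OF that] gF_lipschitz_group[OF that]
    by (simp add: card_gt_0_iff norm_minus_commute)
  then have "(1 / real N) * (\<Sum>j<N. (norm (avg (C j) (\<lambda>i. gF i (xg W e j) - gF i (xh W e))))\<^sup>2)
      \<le> L\<^sup>2 * consensus_err W e"
    unfolding consensus_err_def sum_distrib_left
    by (intro sum_mono) (simp add: divide_right_mono)
  from mult_left_mono[OF this, of "real H"] show ?thesis by simp
qed

lemma sum_local_step_errors_le:
  "(\<Sum>h<H. (1 / real N) * (\<Sum>j<N. (norm (avg (C j) (\<lambda>i. gF i (xc W e j i h) - gF i (xg W e j))))\<^sup>2
       + (norm (avg (C j) (\<lambda>i. gF i (xg W e j) - gF i (xh W e))))\<^sup>2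
       + (norm (yg W j + grad_f j (xh W e) - (1 / real N) *\<^sub>R (\<Sum>j'<N. grad_f j' (xh W e))))\<^sup>2))
     \<le> real H * (L\<^sup>2 * drift_err W e + L\<^sup>2 * consensus_err W e + tracking_err W e)"
  using add_mono[OF add_mono[OF sum_client_drift_le sum_group_deviation_le]
      order_refl[of "real H * tracking_err W e"]]
  by (simp add: tracking_err_def sum.distrib distrib_left sum_distrib_left algebra_simps)

lemma consensus_err_le:
  "consensus_err W e \<le> 4 * \<gamma>\<^sup>2 * noise_err W e
     + 4 * \<gamma>\<^sup>2 * (real e * real H * real H)
       * (\<Sum>e'<e. L\<^sup>2 * drift_err W e' + L\<^sup>2 * consensus_err W e' + tracking_err W e')"
proof -
  let ?K = "{..<e} \<times> {..<H}"
  define q where "q k j = avg (C j) (\<lambda>i. gF i (xc W (fst k) j i (snd k)) - gF i (xg W (fst k) j))"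
    for k :: "nat \<times> nat" and j
  define r where "r k j = avg (C j) (\<lambda>i. gF i (xg W (fst k) j) - gF i (xh W (fst k)))"
    for k :: "nat \<times> nat" and j
  define s where "s k = (1 / real N) * (\<Sum>j<N. (norm (q k j))\<^sup>2 + (norm (r k j))\<^sup>2
      + (norm (yg W j + grad_f j (xh W (fst k)) - (1 / real N) *\<^sub>R (\<Sum>j'<N. grad_f j' (xh W (fst k)))))\<^sup>2)"
    for k :: "nat \<times> nat"
  have sum_s: "(\<Sum>k\<in>?K. s k)
      \<le> real H * (\<Sum>e'<e. L\<^sup>2 * drift_err W e' + L\<^sup>2 * consensus_err W e' + tracking_err W e')"
    unfolding sum.cartesian_product' sum_distrib_left
    using sum_local_step_errors_le by (intro sum_mono) (simp add: s_def q_def r_def)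
  have "consensus_err W e = (1 / real N) * (\<Sum>j<N. (norm (xh W e - xg W e j))\<^sup>2)"
    unfolding consensus_err_def by (simp add: sum_distrib_left)
  also have "\<dots> \<le> 4 * \<gamma>\<^sup>2 * noise_err W e + 4 * \<gamma>\<^sup>2 * real (card ?K) * (\<Sum>k\<in>?K. s k)"
    unfolding noise_err_def s_def
  proof (rule mean_norm_squared_centered_sum_le)
    show "xh W e - xg W e j = \<gamma> *\<^sub>R (\<Sum>k\<in>?K. mtgc_group_grad gs \<gamma> C N E H x0 W t (fst k) (snd k) j
      - (1 / real N) *\<^sub>R (\<Sum>j'<N. mtgc_group_grad gs \<gamma> C N E H x0 W t (fst k) (snd k) j') + yg W j)"
      if "j < N" for j
      using mtgc_xhat_minus_xbj[OF N_pos C_fin_ne that] by (simp add: sum.cartesian_product split_beta')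
    show "mtgc_group_grad gs \<gamma> C N E H x0 W t (fst k) (snd k) j
      = group_noise W (fst k) (snd k) j + q k j + r k j + grad_f j (xh W (fst k))" for k j
      unfolding mtgc_group_grad_def group_noise_def grad_noise_def q_def r_def grad_f_def
      by (simp flip: avg_add avg_diff)
  qed simp
  also have "\<dots> \<le> 4 * \<gamma>\<^sup>2 * noise_err W e + 4 * \<gamma>\<^sup>2 * real (card ?K)
      * (real H * (\<Sum>e'<e. L\<^sup>2 * drift_err W e' + L\<^sup>2 * consensus_err W e' + tracking_err W e'))"
    using sum_s by (intro add_left_mono mult_left_mono) simp_all
  finally show ?thesis
    by (simp add: card_cartesian_product algebra_simps)
qed

end

section \<open>Measurability of the iterates\<close>

lemma borel_measurable_avg:
  assumes "\<And>i. i \<in> A \<Longrightarrow> (\<lambda>\<omega>. f i \<omega>) \<in> borel_measurable \<Omega>"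
  shows "(\<lambda>\<omega>. avg A (\<lambda>i. f i \<omega>) :: 'a::euclidean_space) \<in> borel_measurable \<Omega>"
  unfolding avg_def using assms
  by (intro borel_measurable_scaleR borel_measurable_const borel_measurable_sum) auto

lemma borel_measurable_uncurry_compose:
  assumes "(\<lambda>(x, s). g x s) \<in> borel_measurable (borel \<Otimes>\<^sub>M S)"
    and "x \<in> borel_measurable \<Omega>" and "w \<in> measurable \<Omega> S"
  shows "(\<lambda>\<omega>. g (x \<omega>) (w \<omega>) :: 'a::euclidean_space) \<in> borel_measurable \<Omega>"
  using measurable_compose[OF measurable_Pair[OF assms(2,3)] assms(1)] by simp

lemma measurable_mtgc_loc:
  fixes g :: "'c \<Rightarrow> 'a::euclidean_space \<Rightarrow> 'b \<Rightarrow> 'a"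
  assumes g: "(\<lambda>(x, s). g i x s) \<in> borel_measurable (borel \<Otimes>\<^sub>M S)"
    and "xz \<in> borel_measurable \<Omega>" "z \<in> borel_measurable \<Omega>" "y \<in> borel_measurable \<Omega>"
    and W: "\<And>h'. h' < h \<Longrightarrow> (\<lambda>\<omega>. W \<omega> t e i h') \<in> measurable \<Omega> S"
  shows "(\<lambda>\<omega>. mtgc_loc g \<gamma> (W \<omega>) t e i (z \<omega>) (y \<omega>) (xz \<omega>) h) \<in> borel_measurable \<Omega>"
  using W
proof (induction h)
  case (Suc h)
  then have IH: "(\<lambda>\<omega>. mtgc_loc g \<gamma> (W \<omega>) t e i (z \<omega>) (y \<omega>) (xz \<omega>) h) \<in> borel_measurable \<Omega>"
    by simp
  have "(\<lambda>\<omega>. g i (mtgc_loc g \<gamma> (W \<omega>) t e i (z \<omega>) (y \<omega>) (xz \<omega>) h) (W \<omega> t e i h))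
      \<in> borel_measurable \<Omega>"
    by (rule borel_measurable_uncurry_compose[OF g IH Suc.prems[OF lessI]])
  with IH assms(3,4) show ?case by (simp add: Let_def)
qed (simp add: assms)

lemma measurable_mtgc_inner:
  fixes g :: "'c \<Rightarrow> 'a::euclidean_space \<Rightarrow> 'b \<Rightarrow> 'a"
  assumes g: "\<And>i. i \<in> C j \<Longrightarrow> (\<lambda>(x, s). g i x s) \<in> borel_measurable (borel \<Otimes>\<^sub>M S)"
    and xb: "xb \<in> borel_measurable \<Omega>" and y: "(\<lambda>\<omega>. y \<omega> j) \<in> borel_measurable \<Omega>"
    and W: "\<And>e' i h. e' < e \<Longrightarrow> i \<in> C j \<Longrightarrow> h < H \<Longrightarrow> (\<lambda>\<omega>. W \<omega> t e' i h) \<in> measurable \<Omega> S"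
    and W0: "\<And>i. i \<in> C j \<Longrightarrow> (\<lambda>\<omega>. W \<omega> t 0 i 0) \<in> measurable \<Omega> S"
  shows "(\<lambda>\<omega>. fst (mtgc_inner g \<gamma> C H (W \<omega>) t (xb \<omega>) (y \<omega>) e) j) \<in> borel_measurable \<Omega> \<and>
         (\<forall>i\<in>C j. (\<lambda>\<omega>. snd (mtgc_inner g \<gamma> C H (W \<omega>) t (xb \<omega>) (y \<omega>) e) j i) \<in> borel_measurable \<Omega>)"
  using W
proof (induction e)
  case 0
  have "(\<lambda>\<omega>. g i (xb \<omega>) (W \<omega> t 0 i 0)) \<in> borel_measurable \<Omega>" if "i \<in> C j" for i
    by (rule borel_measurable_uncurry_compose[OF g[OF that] xb W0[OF that]])
  moreover from this have "(\<lambda>\<omega>. avg (C j) (\<lambda>i. g i (xb \<omega>) (W \<omega> t 0 i 0))) \<in> borel_measurable \<Omega>"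
    by (rule borel_measurable_avg)
  ultimately show ?case using xb by auto
next
  case (Suc e)
  let ?inner = "\<lambda>\<omega>. mtgc_inner g \<gamma> C H (W \<omega>) t (xb \<omega>) (y \<omega>) e"
  have IH: "(\<lambda>\<omega>. fst (?inner \<omega>) j) \<in> borel_measurable \<Omega>"
    "\<And>i. i \<in> C j \<Longrightarrow> (\<lambda>\<omega>. snd (?inner \<omega>) j i) \<in> borel_measurable \<Omega>"
    using Suc by auto
  have local: "(\<lambda>\<omega>. mtgc_loc g \<gamma> (W \<omega>) t e i (snd (?inner \<omega>) j i) (y \<omega> j) (fst (?inner \<omega>) j) H)
      \<in> borel_measurable \<Omega>" if "i \<in> C j" for i
    using that by (intro measurable_mtgc_loc[OF g IH(1) IH(2) y] Suc.prems) auto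
  then have "(\<lambda>\<omega>. fst (mtgc_inner g \<gamma> C H (W \<omega>) t (xb \<omega>) (y \<omega>) (Suc e)) j) \<in> borel_measurable \<Omega>"
    unfolding mtgc_inner_Suc_fst by (intro borel_measurable_avg)
  with local IH(2) show ?case
    unfolding mtgc_inner_Suc_snd by simp
qed

lemma measurable_mtgc_round:
  fixes g :: "'c \<Rightarrow> 'a::euclidean_space \<Rightarrow> 'b \<Rightarrow> 'a"
  assumes g: "\<And>i. i \<in> (\<Union>j<N. C j) \<Longrightarrow> (\<lambda>(x, s). g i x s) \<in> borel_measurable (borel \<Otimes>\<^sub>M S)"
    and "E \<ge> 1" "H \<ge> 1"
    and W: "\<And>t' e i h. t' < t \<Longrightarrow> e < E \<Longrightarrow> h < H \<Longrightarrow> i \<in> (\<Union>j<N. C j)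
              \<Longrightarrow> (\<lambda>\<omega>. W \<omega> t' e i h) \<in> measurable \<Omega> S"
    and W0: "\<And>i. i \<in> (\<Union>j<N. C j) \<Longrightarrow> (\<lambda>\<omega>. W \<omega> 0 0 i 0) \<in> measurable \<Omega> S"
  shows "(\<lambda>\<omega>. fst (mtgc_round g \<gamma> C N E H x0 (W \<omega>) t)) \<in> borel_measurable \<Omega> \<and>
         (\<forall>j<N. (\<lambda>\<omega>. snd (mtgc_round g \<gamma> C N E H x0 (W \<omega>) t) j) \<in> borel_measurable \<Omega>)"
  using W
proof (induction t)
  case 0
  have "(\<lambda>\<omega>. avg (C j) (\<lambda>i. g i x0 (W \<omega> 0 0 i 0))) \<in> borel_measurable \<Omega>" if "j < N" for j
    using that by (intro borel_measurable_avg borel_measurable_uncurry_compose[OF g] W0) auto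
  then show ?case by simp
next
  case (Suc t)
  let ?round = "\<lambda>\<omega>. mtgc_round g \<gamma> C N E H x0 (W \<omega>) t"
  have IH: "(\<lambda>\<omega>. fst (?round \<omega>)) \<in> borel_measurable \<Omega>"
    "\<And>j. j < N \<Longrightarrow> (\<lambda>\<omega>. snd (?round \<omega>) j) \<in> borel_measurable \<Omega>"
    using Suc by auto
  have inner: "(\<lambda>\<omega>. fst (mtgc_inner g \<gamma> C H (W \<omega>) t (fst (?round \<omega>)) (snd (?round \<omega>)) E) j)
      \<in> borel_measurable \<Omega>" if "j < N" for j
    using that assms(2,3)
    by (intro measurable_mtgc_inner[where S=S, THEN conjunct1] g IH Suc.prems) auto
  then have "(\<lambda>\<omega>. fst (mtgc_round g \<gamma> C N E H x0 (W \<omega>) (Suc t))) \<in> borel_measurable \<Omega>"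
    unfolding mtgc_round_Suc_fst
    by (intro borel_measurable_scaleR borel_measurable_const borel_measurable_sum) simp
  with inner IH(2) show ?case
    unfolding mtgc_round_Suc_snd by simp
qed

text \<open>drawn_before E H Cl t e h t' e' i h': the sample xi_{i,h'}^{t',e'} is drawn before local
  step h of group round e of global round t.\<close>
definition drawn_before :: "nat \<Rightarrow> nat \<Rightarrow> 'c set \<Rightarrow> nat \<Rightarrow> nat \<Rightarrow> nat \<Rightarrow> nat \<Rightarrow> nat \<Rightarrow> 'c \<Rightarrow> nat \<Rightarrow> bool"
  where "drawn_before E H Cl t e h t' e' i h' \<longleftrightarrow>
    i \<in> Cl \<and> e' < E \<and> h' < H \<and> (t' < t \<or> (t' = t \<and> (e' < e \<or> (e' = e \<and> h' < h))))"

lemma measurable_mtgc_round_drawn_before: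
  fixes g :: "'c \<Rightarrow> 'a::euclidean_space \<Rightarrow> 'b \<Rightarrow> 'a"
  assumes g: "\<And>i. i \<in> (\<Union>j<N. C j) \<Longrightarrow> (\<lambda>(x, s). g i x s) \<in> borel_measurable (borel \<Otimes>\<^sub>M S)"
    and EH: "E \<ge> 1" "H \<ge> 1"
    and W: "\<And>t' e' i h'. drawn_before E H (\<Union>j<N. C j) t e h t' e' i h'
              \<Longrightarrow> (\<lambda>\<omega>. W \<omega> t' e' i h') \<in> measurable \<Omega> S"
    and "e > 0 \<or> h > 0"
  shows "(\<lambda>\<omega>. fst (mtgc_round g \<gamma> C N E H x0 (W \<omega>) t)) \<in> borel_measurable \<Omega> \<and>
         (\<forall>j<N. (\<lambda>\<omega>. snd (mtgc_round g \<gamma> C N E H x0 (W \<omega>) t) j) \<in> borel_measurable \<Omega>)"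
  using EH assms(5) by (intro measurable_mtgc_round[OF g EH] W) (auto simp: drawn_before_def)

lemma measurable_mtgc_xbar:
  fixes g :: "'c \<Rightarrow> 'a::euclidean_space \<Rightarrow> 'b \<Rightarrow> 'a"
  assumes g: "\<And>i. i \<in> (\<Union>j<N. C j) \<Longrightarrow> (\<lambda>(x, s). g i x s) \<in> borel_measurable (borel \<Otimes>\<^sub>M S)"
    and EH: "E \<ge> 1" "H \<ge> 1"
    and W: "\<And>t' e i h. t' < t \<Longrightarrow> e < E \<Longrightarrow> h < H \<Longrightarrow> i \<in> (\<Union>j<N. C j)
              \<Longrightarrow> (\<lambda>\<omega>. W \<omega> t' e i h) \<in> measurable \<Omega> S"
  shows "(\<lambda>\<omega>. mtgc_xbar g \<gamma> C N E H x0 (W \<omega>) t) \<in> borel_measurable \<Omega>"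
proof (cases t)
  case (Suc t0)
  with EH show ?thesis
    unfolding mtgc_xbar_def by (intro measurable_mtgc_round[OF g EH, THEN conjunct1] W) auto
qed (simp add: mtgc_xbar_def)

lemma measurable_mtgc_inner_drawn_before:
  fixes g :: "'c \<Rightarrow> 'a::euclidean_space \<Rightarrow> 'b \<Rightarrow> 'a"
  assumes g: "\<And>i. i \<in> (\<Union>j<N. C j) \<Longrightarrow> (\<lambda>(x, s). g i x s) \<in> borel_measurable (borel \<Otimes>\<^sub>M S)"
    and EH: "E \<ge> 1" "H \<ge> 1" and "j < N" "e \<le> E"
    and W: "\<And>t' e' i h'. drawn_before E H (\<Union>j<N. C j) t e h t' e' i h'
              \<Longrightarrow> (\<lambda>\<omega>. W \<omega> t' e' i h') \<in> measurable \<Omega> S"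
    and nz: "e > 0 \<or> h > 0"
  shows "(\<lambda>\<omega>. mtgc_xbj g \<gamma> C N E H x0 (W \<omega>) t e j) \<in> borel_measurable \<Omega> \<and>
         (\<forall>i\<in>C j. (\<lambda>\<omega>. mtgc_z g \<gamma> C N E H x0 (W \<omega>) t e j i) \<in> borel_measurable \<Omega>)"
proof -
  have round: "(\<lambda>\<omega>. fst (mtgc_round g \<gamma> C N E H x0 (W \<omega>) t)) \<in> borel_measurable \<Omega>"
    "(\<lambda>\<omega>. snd (mtgc_round g \<gamma> C N E H x0 (W \<omega>) t) j) \<in> borel_measurable \<Omega>"
    using measurable_mtgc_round_drawn_before[where g=g and C=C and W=W and t=t and \<gamma>=\<gamma>, OF g EH W nz]
      \<open>j < N\<close> by auto
  have "(\<lambda>\<omega>. fst (mtgc_inner g \<gamma> C H (W \<omega>) t (fst (mtgc_round g \<gamma> C N E H x0 (W \<omega>) t))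
            (snd (mtgc_round g \<gamma> C N E H x0 (W \<omega>) t)) e) j) \<in> borel_measurable \<Omega> \<and>
        (\<forall>i\<in>C j. (\<lambda>\<omega>. snd (mtgc_inner g \<gamma> C H (W \<omega>) t (fst (mtgc_round g \<gamma> C N E H x0 (W \<omega>) t))
            (snd (mtgc_round g \<gamma> C N E H x0 (W \<omega>) t)) e) j i) \<in> borel_measurable \<Omega>)"
    by (rule measurable_mtgc_inner)
      (use round assms(4,5) EH nz in \<open>auto intro!: g W simp: drawn_before_def\<close>)
  then show ?thesis
    unfolding mtgc_xbj_def mtgc_z_def mtgc_xbar_def mtgc_y_def by simp
qed

lemma measurable_mtgc_xbj:
  fixes g :: "'c \<Rightarrow> 'a::euclidean_space \<Rightarrow> 'b \<Rightarrow> 'a"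
  assumes g: "\<And>i. i \<in> (\<Union>j<N. C j) \<Longrightarrow> (\<lambda>(x, s). g i x s) \<in> borel_measurable (borel \<Otimes>\<^sub>M S)"
    and EH: "E \<ge> 1" "H \<ge> 1" and "j < N" "e \<le> E"
    and W: "\<And>t' e' i h'. drawn_before E H (\<Union>j<N. C j) t e 0 t' e' i h'
              \<Longrightarrow> (\<lambda>\<omega>. W \<omega> t' e' i h') \<in> measurable \<Omega> S"
  shows "(\<lambda>\<omega>. mtgc_xbj g \<gamma> C N E H x0 (W \<omega>) t e j) \<in> borel_measurable \<Omega>"
proof (cases "e = 0")
  case True
  have "(\<lambda>\<omega>. mtgc_xbar g \<gamma> C N E H x0 (W \<omega>) t) \<in> borel_measurable \<Omega>"
    by (intro measurable_mtgc_xbar[OF g EH] W) (auto simp: drawn_before_def)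
  with True show ?thesis unfolding mtgc_xbj_def mtgc_xbar_def by simp
next
  case False
  then have "e > 0 \<or> (0::nat) > 0" by simp
  from measurable_mtgc_inner_drawn_before[where h=0 and g=g and C=C and W=W and t=t and \<gamma>=\<gamma>,
      OF g EH assms(4,5) W this]
  show ?thesis ..
qed

lemma measurable_mtgc_x:
  fixes g :: "'c \<Rightarrow> 'a::euclidean_space \<Rightarrow> 'b \<Rightarrow> 'a"
  assumes g: "\<And>i. i \<in> (\<Union>j<N. C j) \<Longrightarrow> (\<lambda>(x, s). g i x s) \<in> borel_measurable (borel \<Otimes>\<^sub>M S)"
    and EH: "E \<ge> 1" "H \<ge> 1" and j: "j < N" and i: "i \<in> C j" and "e < E" "h \<le> H"
    and W: "\<And>t' e' i h'. drawn_before E H (\<Union>j<N. C j) t e h t' e' i h'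
              \<Longrightarrow> (\<lambda>\<omega>. W \<omega> t' e' i h') \<in> measurable \<Omega> S"
  shows "(\<lambda>\<omega>. mtgc_x g \<gamma> C N E H x0 (W \<omega>) t e j i h) \<in> borel_measurable \<Omega>"
proof -
  have xb: "(\<lambda>\<omega>. mtgc_xbj g \<gamma> C N E H x0 (W \<omega>) t e j) \<in> borel_measurable \<Omega>"
    using assms(6) by (intro measurable_mtgc_xbj[OF g EH j] W) (auto simp: drawn_before_def)
  have "e \<le> E" using \<open>e < E\<close> by simp
  show ?thesis
  proof (cases "h = 0")
    case True
    with xb show ?thesis unfolding mtgc_x_def by simp
  next
    case False
    then have nz: "e > 0 \<or> h > 0" by simp
    have iC: "i \<in> (\<Union>j<N. C j)" using i j by blast
    have z: "(\<lambda>\<omega>. mtgc_z g \<gamma> C N E H x0 (W \<omega>) t e j i) \<in> borel_measurable \<Omega>"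
      using measurable_mtgc_inner_drawn_before[where g=g and C=C and W=W and t=t and \<gamma>=\<gamma>,
          OF g EH j \<open>e \<le> E\<close> W nz] i
      by simp
    have y: "(\<lambda>\<omega>. mtgc_y g \<gamma> C N E H x0 (W \<omega>) t j) \<in> borel_measurable \<Omega>"
      using measurable_mtgc_round_drawn_before[where g=g and C=C and W=W and t=t and \<gamma>=\<gamma>, OF g EH W nz] j
      unfolding mtgc_y_def by simp
    show ?thesis
      unfolding mtgc_x_def
      by (rule measurable_mtgc_loc[where g=g and i=i, OF g[OF iC] xb z y])
        (use iC assms(6,7) in \<open>auto intro!: W simp: drawn_before_def\<close>)
  qed
qed

section \<open>Independence of a fresh sample from the past\<close>

definition gen_sigma :: "'m measure \<Rightarrow> 'b measure \<Rightarrow> ('k \<Rightarrow> 'm \<Rightarrow> 'b) \<Rightarrow> 'k set \<Rightarrow> 'm measure" where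
  "gen_sigma M S X P = sigma (space M) (\<Union>p\<in>P. {X p -` A \<inter> space M | A. A \<in> sets S})"

lemma space_gen_sigma [simp]: "space (gen_sigma M S X P) = space M"
  unfolding gen_sigma_def by (rule space_measure_of) auto

lemma sets_gen_sigma:
  "sets (gen_sigma M S X P) = sigma_sets (space M) (\<Union>p\<in>P. {X p -` A \<inter> space M | A. A \<in> sets S})"
  unfolding gen_sigma_def by (rule sets_measure_of) auto

lemma measurable_gen_sigma:
  assumes "p \<in> P" "X p \<in> measurable M S"
  shows "X p \<in> measurable (gen_sigma M S X P) S"
proof (rule measurableI)
  fix x assume "x \<in> space (gen_sigma M S X P)"
  then show "X p x \<in> space S" using assms(2) by (auto dest: measurable_space)
next
  fix A assume "A \<in> sets S"
  then have "X p -` A \<inter> space M \<in> (\<Union>p\<in>P. {X p -` A \<inter> space M | A. A \<in> sets S})"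
    using assms(1) by blast
  then show "X p -` A \<inter> space (gen_sigma M S X P) \<in> sets (gen_sigma M S X P)"
    unfolding space_gen_sigma sets_gen_sigma by (rule sigma_sets.Basic)
qed

text \<open>Independence of two random variables with different codomain types (the library's
  \<open>indep_var\<close> needs a common one), stated through their joint law.\<close>
definition (in prob_space) indep_rv :: "'z measure \<Rightarrow> ('a \<Rightarrow> 'z) \<Rightarrow> 'b measure \<Rightarrow> ('a \<Rightarrow> 'b) \<Rightarrow> bool" where
  "indep_rv Mz Z S \<xi> \<longleftrightarrow> random_variable Mz Z \<and> random_variable S \<xi> \<and>
     distr M Mz Z \<Otimes>\<^sub>M distr M S \<xi> = distr M (Mz \<Otimes>\<^sub>M S) (\<lambda>\<omega>. (Z \<omega>, \<xi> \<omega>))"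

lemma (in prob_space) indep_rvI:
  assumes Z: "random_variable Mz Z" and \<xi>: "random_variable S \<xi>"
    and indep: "indep_set (sigma_sets (space M) {Z -` A \<inter> space M | A. A \<in> sets Mz})
                          (sigma_sets (space M) {\<xi> -` A \<inter> space M | A. A \<in> sets S})"
  shows "indep_rv Mz Z S \<xi>"
proof -
  have Z\<xi>: "random_variable (Mz \<Otimes>\<^sub>M S) (\<lambda>\<omega>. (Z \<omega>, \<xi> \<omega>))"
    using Z \<xi> by (rule measurable_Pair)
  interpret PZ: prob_space "distr M Mz Z" by (rule prob_space_distr[OF Z])
  interpret P\<xi>: prob_space "distr M S \<xi>" by (rule prob_space_distr[OF \<xi>])
  interpret PZ\<xi>: pair_prob_space "distr M Mz Z" "distr M S \<xi>" ..
  have "distr M Mz Z \<Otimes>\<^sub>M distr M S \<xi> = distr M (Mz \<Otimes>\<^sub>M S) (\<lambda>\<omega>. (Z \<omega>, \<xi> \<omega>))"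
  proof (rule pair_measure_eqI)
    fix A B assume A: "A \<in> sets (distr M Mz Z)" and B: "B \<in> sets (distr M S \<xi>)"
    have "(\<lambda>\<omega>. (Z \<omega>, \<xi> \<omega>)) -` (A \<times> B) \<inter> space M = (Z -` A \<inter> space M) \<inter> (\<xi> -` B \<inter> space M)"
      by auto
    moreover have "Z -` A \<inter> space M \<in> sigma_sets (space M) {Z -` A \<inter> space M | A. A \<in> sets Mz}"
      "\<xi> -` B \<inter> space M \<in> sigma_sets (space M) {\<xi> -` A \<inter> space M | A. A \<in> sets S}"
      using A B by (auto intro: sigma_sets.Basic)
    ultimately have "emeasure M ((\<lambda>\<omega>. (Z \<omega>, \<xi> \<omega>)) -` (A \<times> B) \<inter> space M)
        = emeasure M (Z -` A \<inter> space M) * emeasure M (\<xi> -` B \<inter> space M)"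
      using indep[unfolded indep_sets2_eq] by (simp add: emeasure_eq_measure measure_nonneg ennreal_mult)
    with A B Z \<xi> Z\<xi> show "emeasure (distr M Mz Z) A * emeasure (distr M S \<xi>) B
        = emeasure (distr M (Mz \<Otimes>\<^sub>M S) (\<lambda>\<omega>. (Z \<omega>, \<xi> \<omega>))) (A \<times> B)"
      by (simp add: emeasure_distr)
  qed (simp_all add: PZ.sigma_finite_measure P\<xi>.sigma_finite_measure)
  with Z \<xi> show ?thesis unfolding indep_rv_def by simp
qed

lemma measurable_of_gen_sigma:
  assumes "\<And>p. p \<in> P \<Longrightarrow> X p \<in> measurable M S" and Z: "Z \<in> measurable (gen_sigma M S X P) Mz"
  shows "Z \<in> measurable M Mz"
proof (rule measurableI)
  have "sets (gen_sigma M S X P) \<subseteq> sets M"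
    unfolding sets_gen_sigma using assms(1)
    by (intro sigma_sets_le_sets_iff[THEN iffD2]) (auto intro: measurable_sets)
  then show "A \<in> sets Mz \<Longrightarrow> Z -` A \<inter> space M \<in> sets M" for A
    using measurable_sets[OF Z] by auto
qed (use measurable_space[OF Z] in simp)

lemma (in prob_space) indep_set_gen_sigma:
  assumes indep: "indep_vars (\<lambda>_. S) X I" and "P \<subseteq> I" "k \<in> I" "k \<notin> P"
  shows "indep_set (sets (gen_sigma M S X P)) (sigma_sets (space M) {X k -` A \<inter> space M | A. A \<in> sets S})"
proof -
  define F where "F p = {X p -` A \<inter> space M | A. A \<in> sets S}" for p
  define J where "J b = (if b then P else {k})" for b
  have "(\<Union>b. J b) \<subseteq> I" using \<open>P \<subseteq> I\<close> \<open>k \<in> I\<close> by (simp add: J_def UNIV_bool)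
  then have "indep_sets F (\<Union>b. J b)"
    using indep unfolding indep_vars_def2 F_def by (blast intro: indep_sets_mono_index)
  moreover have "Int_stable (F p)" for p
    unfolding F_def Int_stable_def by (auto, rule_tac x="A \<inter> Aa" in exI, auto)
  moreover have "disjoint_family_on J UNIV"
    unfolding J_def disjoint_family_on_def using \<open>k \<notin> P\<close> by auto
  ultimately have "indep_sets (\<lambda>b. sigma_sets (space M) (\<Union>p\<in>J b. F p)) UNIV"
    by (rule indep_sets_collect_sigma)
  then show ?thesis
    unfolding indep_set_def sets_gen_sigma F_def[symmetric]
  proof (rule indep_sets_cong[THEN iffD1, OF refl, rotated])
    show "sigma_sets (space M) (\<Union>p\<in>J b. F p)
        = case_bool (sigma_sets (space M) (\<Union>p\<in>P. F p)) (sigma_sets (space M) (F k)) b" for b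
      by (cases b) (simp_all add: J_def)
  qed
qed

lemma (in prob_space) indep_rv_gen_sigma:
  assumes indep: "indep_vars (\<lambda>_. S) X I" and "P \<subseteq> I" "k \<in> I" "k \<notin> P"
    and Z: "Z \<in> measurable (gen_sigma M S X P) Mz"
  shows "indep_rv Mz Z S (X k)"
proof (rule indep_rvI)
  have X: "\<And>p. p \<in> I \<Longrightarrow> X p \<in> measurable M S" using indep unfolding indep_vars_def by auto
  then show "random_variable Mz Z"
    using \<open>P \<subseteq> I\<close> by (intro measurable_of_gen_sigma[OF _ Z]) auto
  show "random_variable S (X k)" using X \<open>k \<in> I\<close> by simp
  have Z_past: "sigma_sets (space M) {Z -` A \<inter> space M | A. A \<in> sets Mz} \<subseteq> sets (gen_sigma M S X P)"
    using measurable_sets[OF Z] by (intro sets.sigma_sets_subset[of _ "gen_sigma M S X P", simplified]) auto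
  show "indep_set (sigma_sets (space M) {Z -` A \<inter> space M | A. A \<in> sets Mz})
                  (sigma_sets (space M) {X k -` A \<inter> space M | A. A \<in> sets S})"
    using indep_set_gen_sigma[OF assms(1-4)] unfolding indep_set_def
    by (rule indep_sets_mono_sets) (use Z_past in \<open>auto split: bool.split\<close>)
qed

lemma (in prob_space) nn_integral_noise_squared_le:
  fixes g :: "'v::euclidean_space \<Rightarrow> 'b \<Rightarrow> 'v" and G :: "'v \<Rightarrow> 'v"
  assumes indep: "indep_rv borel Z S \<xi>" and distr: "distr M S \<xi> = D"
    and g: "(\<lambda>(x, s). g x s) \<in> borel_measurable (borel \<Otimes>\<^sub>M S)" and G: "G \<in> borel_measurable borel"
    and var: "\<And>x. (\<integral>\<^sup>+ s. ennreal ((norm (g x s - G x))\<^sup>2) \<partial>D) \<le> ennreal (\<sigma>\<^sup>2)"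
  shows "(\<integral>\<^sup>+ \<omega>. ennreal ((norm (g (Z \<omega>) (\<xi> \<omega>) - G (Z \<omega>)))\<^sup>2) \<partial>M) \<le> ennreal (\<sigma>\<^sup>2)"
proof -
  have Z: "random_variable borel Z" and \<xi>: "random_variable S \<xi>"
    and joint: "distr M borel Z \<Otimes>\<^sub>M distr M S \<xi> = distr M (borel \<Otimes>\<^sub>M S) (\<lambda>\<omega>. (Z \<omega>, \<xi> \<omega>))"
    using indep unfolding indep_rv_def by auto
  interpret PZ: prob_space "distr M borel Z" by (rule prob_space_distr[OF Z])
  interpret P\<xi>: prob_space "distr M S \<xi>" by (rule prob_space_distr[OF \<xi>])
  define f where "f p = ennreal ((norm (g (fst p) (snd p) - G (fst p)))\<^sup>2)" for p
  have f: "f \<in> borel_measurable (borel \<Otimes>\<^sub>M S)"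
    unfolding f_def using g G by measurable
  have "(\<integral>\<^sup>+ \<omega>. ennreal ((norm (g (Z \<omega>) (\<xi> \<omega>) - G (Z \<omega>)))\<^sup>2) \<partial>M) = (\<integral>\<^sup>+ \<omega>. f (Z \<omega>, \<xi> \<omega>) \<partial>M)"
    by (simp add: f_def)
  also have "\<dots> = integral\<^sup>N (distr M (borel \<Otimes>\<^sub>M S) (\<lambda>\<omega>. (Z \<omega>, \<xi> \<omega>))) f"
    by (rule nn_integral_distr[symmetric, OF measurable_Pair[OF Z \<xi>]]) (simp add: f)
  also have "\<dots> = (\<integral>\<^sup>+ z. \<integral>\<^sup>+ s. f (z, s) \<partial>distr M S \<xi> \<partial>distr M borel Z)"
    unfolding joint[symmetric]
    by (rule P\<xi>.nn_integral_fst[symmetric])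
       (simp add: measurable_cong_sets[OF sets_pair_measure_cong[OF sets_distr sets_distr] refl] f)
  also have "\<dots> \<le> (\<integral>\<^sup>+ z. ennreal (\<sigma>\<^sup>2) \<partial>distr M borel Z)"
    by (intro nn_integral_mono) (simp add: f_def distr var)
  also have "\<dots> = ennreal (\<sigma>\<^sup>2)" using PZ.emeasure_space_1 by simp
  finally show ?thesis .
qed

lemma (in pair_prob_space) integrable_inner_of_square_bounds:
  fixes u :: "'a \<Rightarrow> 'v::euclidean_space" and v :: "'a \<times> 'b \<Rightarrow> 'v"
  assumes u: "u \<in> borel_measurable M1" and v: "v \<in> borel_measurable (M1 \<Otimes>\<^sub>M M2)"
    and u_L2: "(\<integral>\<^sup>+ z. ennreal ((norm (u z))\<^sup>2) \<partial>M1) < \<infinity>"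
    and v_bound: "\<And>z. (\<integral>\<^sup>+ s. ennreal ((norm (v (z, s)))\<^sup>2) \<partial>M2) \<le> ennreal c"
  shows "integrable (M1 \<Otimes>\<^sub>M M2) (\<lambda>p. inner (u (fst p)) (v p))"
proof -
  define bound where "bound p = ennreal ((norm (u (fst p)))\<^sup>2) + ennreal ((norm (v p))\<^sup>2)" for p
  have "(\<integral>\<^sup>+ p. ennreal (norm (inner (u (fst p)) (v p))) \<partial>(M1 \<Otimes>\<^sub>M M2)) \<le> (\<integral>\<^sup>+ p. bound p \<partial>(M1 \<Otimes>\<^sub>M M2))"
    unfolding bound_def using abs_inner_le_norm_squares
    by (intro nn_integral_mono) (simp add: ennreal_plus[symmetric] del: ennreal_plus)
  also have "\<dots> = (\<integral>\<^sup>+ z. \<integral>\<^sup>+ s. bound (z, s) \<partial>M2 \<partial>M1)"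
    by (rule M2.nn_integral_fst[symmetric]) (use u v in \<open>simp add: bound_def\<close>)
  also have "\<dots> \<le> (\<integral>\<^sup>+ z. ennreal ((norm (u z))\<^sup>2) + ennreal c \<partial>M1)"
  proof (rule nn_integral_mono)
    fix z assume "z \<in> space M1"
    with v have "(\<lambda>s. v (z, s)) \<in> borel_measurable M2"
      by (rule measurable_Pair2)
    then show "(\<integral>\<^sup>+ s. bound (z, s) \<partial>M2) \<le> ennreal ((norm (u z))\<^sup>2) + ennreal c"
      using v_bound[of z] M2.emeasure_space_1 by (simp add: bound_def nn_integral_add add_left_mono)
  qed
  also have "\<dots> < \<infinity>"
    using u u_L2 M1.emeasure_space_1 by (simp add: nn_integral_add)
  finally show ?thesis
    using u v by (simp add: integrable_iff_bounded)
qed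

lemma (in pair_prob_space) integral_inner_eq_0_of_centered:
  fixes u :: "'a \<Rightarrow> 'v::euclidean_space" and v :: "'a \<times> 'b \<Rightarrow> 'v"
  assumes u: "u \<in> borel_measurable M1" and v: "v \<in> borel_measurable (M1 \<Otimes>\<^sub>M M2)"
    and u_L2: "(\<integral>\<^sup>+ z. ennreal ((norm (u z))\<^sup>2) \<partial>M1) < \<infinity>"
    and v_bound: "\<And>z. (\<integral>\<^sup>+ s. ennreal ((norm (v (z, s)))\<^sup>2) \<partial>M2) \<le> ennreal c"
    and centered: "\<And>z. integrable M2 (\<lambda>s. v (z, s)) \<and> (\<integral>s. v (z, s) \<partial>M2) = 0"
  shows "(\<integral>p. inner (u (fst p)) (v p) \<partial>(M1 \<Otimes>\<^sub>M M2)) = 0"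
proof -
  have "(\<integral>p. inner (u (fst p)) (v p) \<partial>(M1 \<Otimes>\<^sub>M M2)) = (\<integral>z. (\<integral>s. inner (u z) (v (z, s)) \<partial>M2) \<partial>M1)"
    using integral_fst'[OF integrable_inner_of_square_bounds[OF u v u_L2 v_bound]] by simp
  also have "\<dots> = 0"
    using centered by (simp add: integral_inner_right)
  finally show ?thesis .
qed

text \<open>The cross term between a square-integrable quantity of the past and a fresh noise term
  vanishes: condition on the past (Fubini on the product law) and use unbiasedness.\<close>
lemma (in prob_space) integral_inner_noise_eq_0:
  fixes g :: "'v::euclidean_space \<Rightarrow> 'b \<Rightarrow> 'v" and G :: "'v \<Rightarrow> 'v" and U X :: "'a \<Rightarrow> 'v"
  assumes indep: "indep_rv (borel \<Otimes>\<^sub>M borel) (\<lambda>\<omega>. (U \<omega>, X \<omega>)) S \<xi>" and distr: "distr M S \<xi> = D"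
    and g: "(\<lambda>(x, s). g x s) \<in> borel_measurable (borel \<Otimes>\<^sub>M S)" and G: "G \<in> borel_measurable borel"
    and var: "\<And>x. (\<integral>\<^sup>+ s. ennreal ((norm (g x s - G x))\<^sup>2) \<partial>D) \<le> ennreal (\<sigma>\<^sup>2)"
    and unbiased: "\<And>x. integrable D (g x) \<and> (\<integral>s. g x s \<partial>D) = G x"
    and U_L2: "(\<integral>\<^sup>+ \<omega>. ennreal ((norm (U \<omega>))\<^sup>2) \<partial>M) < \<infinity>"
  shows "(\<integral>\<omega>. inner (U \<omega>) (g (X \<omega>) (\<xi> \<omega>) - G (X \<omega>)) \<partial>M) = 0"
proof -
  let ?Z = "\<lambda>\<omega>. (U \<omega>, X \<omega>)" and ?B = "borel \<Otimes>\<^sub>M borel :: ('v \<times> 'v) measure"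
  have Z: "random_variable ?B ?Z" and \<xi>: "random_variable S \<xi>"
    and joint: "distr M ?B ?Z \<Otimes>\<^sub>M distr M S \<xi> = distr M (?B \<Otimes>\<^sub>M S) (\<lambda>\<omega>. (?Z \<omega>, \<xi> \<omega>))"
    using indep unfolding indep_rv_def by auto
  interpret PZ: prob_space "distr M ?B ?Z" by (rule prob_space_distr[OF Z])
  interpret P\<xi>: prob_space "distr M S \<xi>" by (rule prob_space_distr[OF \<xi>])
  interpret PP: pair_prob_space "distr M ?B ?Z" "distr M S \<xi>" ..
  have sets_P: "sets (distr M ?B ?Z \<Otimes>\<^sub>M distr M S \<xi>) = sets (?B \<Otimes>\<^sub>M S)"
    by (rule sets_pair_measure_cong[OF sets_distr sets_distr])
  define v where "v p = g (snd (fst p)) (snd p) - G (snd (fst p))" for p :: "('v \<times> 'v) \<times> 'b"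
  have v: "v \<in> borel_measurable (?B \<Otimes>\<^sub>M S)" unfolding v_def using g G by measurable
  have "(\<integral>\<omega>. inner (U \<omega>) (g (X \<omega>) (\<xi> \<omega>) - G (X \<omega>)) \<partial>M)
      = (\<integral>p. inner (fst (fst p)) (v p) \<partial>(distr M ?B ?Z \<Otimes>\<^sub>M distr M S \<xi>))"
  proof -
    have "(\<lambda>p. inner (fst (fst p)) (v p)) \<in> borel_measurable (?B \<Otimes>\<^sub>M S)" using v by measurable
    then show ?thesis
      unfolding joint by (subst integral_distr[OF measurable_Pair[OF Z \<xi>]]) (simp_all add: v_def)
  qed
  also have "\<dots> = 0"
  proof (rule PP.integral_inner_eq_0_of_centered)
    show "v \<in> borel_measurable (distr M ?B ?Z \<Otimes>\<^sub>M distr M S \<xi>)"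
      using v by (simp add: measurable_cong_sets[OF sets_P refl])
    show "(\<integral>\<^sup>+ z. ennreal ((norm (fst z))\<^sup>2) \<partial>distr M ?B ?Z) < \<infinity>"
      using U_L2 by (subst nn_integral_distr[OF Z]) simp_all
    show "(\<integral>\<^sup>+ s. ennreal ((norm (v (z, s)))\<^sup>2) \<partial>distr M S \<xi>) \<le> ennreal (\<sigma>\<^sup>2)" for z
      using var[of "snd z"] by (simp add: v_def distr)
    show "integrable (distr M S \<xi>) (\<lambda>s. v (z, s)) \<and> (\<integral>s. v (z, s) \<partial>distr M S \<xi>) = 0" for z
    proof -
      interpret PD: prob_space D using P\<xi>.prob_space_axioms distr by simp
      from unbiased[of "snd z"] show ?thesis
        by (simp add: v_def distr Bochner_Integration.integral_diff PD.prob_space)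
    qed
  qed simp
  finally show ?thesis .
qed

lemma integral_norm_sum_orthogonal:
  fixes f :: "'k \<Rightarrow> 'm \<Rightarrow> 'a::euclidean_space" and \<alpha> :: "'k \<Rightarrow> real"
  assumes "finite T"
    and f: "\<And>\<tau>. \<tau> \<in> T \<Longrightarrow> f \<tau> \<in> borel_measurable M"
    and f_L2: "\<And>\<tau>. \<tau> \<in> T \<Longrightarrow> integrable M (\<lambda>\<omega>. (norm (f \<tau> \<omega>))\<^sup>2)"
    and orth: "\<And>\<tau>1 \<tau>2. \<tau>1 \<in> T \<Longrightarrow> \<tau>2 \<in> T \<Longrightarrow> \<tau>1 \<noteq> \<tau>2 \<Longrightarrow> (\<integral>\<omega>. inner (f \<tau>1 \<omega>) (f \<tau>2 \<omega>) \<partial>M) = 0"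
  shows "integrable M (\<lambda>\<omega>. (norm (\<Sum>\<tau>\<in>T. \<alpha> \<tau> *\<^sub>R f \<tau> \<omega>))\<^sup>2)"
    and "(\<integral>\<omega>. (norm (\<Sum>\<tau>\<in>T. \<alpha> \<tau> *\<^sub>R f \<tau> \<omega>))\<^sup>2 \<partial>M) = (\<Sum>\<tau>\<in>T. (\<alpha> \<tau>)\<^sup>2 * (\<integral>\<omega>. (norm (f \<tau> \<omega>))\<^sup>2 \<partial>M))"
proof -
  have inner: "integrable M (\<lambda>\<omega>. inner (f \<tau>1 \<omega>) (f \<tau>2 \<omega>))" if "\<tau>1 \<in> T" "\<tau>2 \<in> T" for \<tau>1 \<tau>2
  proof (rule Bochner_Integration.integrable_bound)
    show "integrable M (\<lambda>\<omega>. (norm (f \<tau>1 \<omega>))\<^sup>2 + (norm (f \<tau>2 \<omega>))\<^sup>2)"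
      using f_L2 that by auto
    show "(\<lambda>\<omega>. inner (f \<tau>1 \<omega>) (f \<tau>2 \<omega>)) \<in> borel_measurable M"
      using f that by auto
  qed (use abs_inner_le_norm_squares in auto)
  have expand: "(norm (\<Sum>\<tau>\<in>T. \<alpha> \<tau> *\<^sub>R f \<tau> \<omega>))\<^sup>2
      = (\<Sum>\<tau>1\<in>T. \<Sum>\<tau>2\<in>T. (\<alpha> \<tau>1 * \<alpha> \<tau>2) * inner (f \<tau>2 \<omega>) (f \<tau>1 \<omega>))" for \<omega>
    unfolding power2_norm_eq_inner inner_sum_left inner_sum_right by (simp add: algebra_simps)
  show "integrable M (\<lambda>\<omega>. (norm (\<Sum>\<tau>\<in>T. \<alpha> \<tau> *\<^sub>R f \<tau> \<omega>))\<^sup>2)"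
    unfolding expand using inner by (intro Bochner_Integration.integrable_sum integrable_mult_right) auto
  have "(\<integral>\<omega>. (norm (\<Sum>\<tau>\<in>T. \<alpha> \<tau> *\<^sub>R f \<tau> \<omega>))\<^sup>2 \<partial>M)
      = (\<Sum>\<tau>1\<in>T. \<Sum>\<tau>2\<in>T. (\<alpha> \<tau>1 * \<alpha> \<tau>2) * (\<integral>\<omega>. inner (f \<tau>2 \<omega>) (f \<tau>1 \<omega>) \<partial>M))"
    unfolding expand using inner
    by (simp add: Bochner_Integration.integral_sum integrable_mult_right Bochner_Integration.integrable_sum)
  also have "\<dots> = (\<Sum>\<tau>1\<in>T. \<Sum>\<tau>2\<in>T. if \<tau>2 = \<tau>1 then (\<alpha> \<tau>1)\<^sup>2 * (\<integral>\<omega>. (norm (f \<tau>1 \<omega>))\<^sup>2 \<partial>M) else 0)"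
    by (intro sum.cong refl) (auto simp: orth power2_eq_square dot_square_norm)
  also have "\<dots> = (\<Sum>\<tau>\<in>T. (\<alpha> \<tau>)\<^sup>2 * (\<integral>\<omega>. (norm (f \<tau> \<omega>))\<^sup>2 \<partial>M))"
    using \<open>finite T\<close> by simp
  finally show "(\<integral>\<omega>. (norm (\<Sum>\<tau>\<in>T. \<alpha> \<tau> *\<^sub>R f \<tau> \<omega>))\<^sup>2 \<partial>M)
      = (\<Sum>\<tau>\<in>T. (\<alpha> \<tau>)\<^sup>2 * (\<integral>\<omega>. (norm (f \<tau> \<omega>))\<^sup>2 \<partial>M))" .
qed

lemma sum_indicator_minus_mean_squared:
  assumes "j0 < N"
  shows "(\<Sum>j<N. ((if j0 = j then 1 else 0) - 1 / real N)\<^sup>2) = (real N - 1) / real N"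
proof -
  have "(\<Sum>j<N. ((if j0 = j then 1 else 0) - 1 / real N)\<^sup>2)
      = (1 - 1 / real N)\<^sup>2 + (\<Sum>j\<in>{..<N} - {j0}. (1 / real N)\<^sup>2)"
    using assms by (subst sum.remove[of _ j0]) (auto intro!: sum.cong)
  also have "\<dots> = (1 - 1 / real N)\<^sup>2 + (real N - 1) * (1 / real N)\<^sup>2"
    using assms by (simp add: card_Diff_subset)
  also have "\<dots> = (real N - 1) / real N"
    using assms by (simp add: field_simps power2_eq_square)
  finally show ?thesis .
qed

section \<open>The noise in expectation\<close>

locale mtgc_stochastic = mtgc_lipschitz gs gF C N E H \<gamma> L x0 t
  for gs :: "'c \<Rightarrow> 'a::euclidean_space \<Rightarrow> 'b \<Rightarrow> 'a" and gF C N E H \<gamma> L x0 t +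
  fixes M :: "'m measure" and S :: "'b measure" and D :: "'c \<Rightarrow> 'b measure" and \<sigma> :: real
    and \<xi> :: "nat \<Rightarrow> nat \<Rightarrow> 'c \<Rightarrow> nat \<Rightarrow> 'm \<Rightarrow> 'b"
  assumes prob: "prob_space M"
    and C_disj: "\<And>j j'. j < N \<Longrightarrow> j' < N \<Longrightarrow> j \<noteq> j' \<Longrightarrow> C j \<inter> C j' = {}"
    and E_pos: "E \<ge> 1" and H_pos: "H \<ge> 1"
    and gs_meas: "\<And>i. i \<in> (\<Union>j<N. C j) \<Longrightarrow> (\<lambda>(x, s). gs i x s) \<in> borel_measurable (borel \<Otimes>\<^sub>M S)"
    and unbiased: "\<And>i x. i \<in> (\<Union>j<N. C j) \<Longrightarrow> integrable (D i) (gs i x) \<and> (\<integral>s. gs i x s \<partial>D i) = gF i x"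
    and variance: "\<And>i x. i \<in> (\<Union>j<N. C j) \<Longrightarrow>
                     (\<integral>\<^sup>+ s. ennreal ((norm (gs i x s - gF i x))\<^sup>2) \<partial>D i) \<le> ennreal (\<sigma>\<^sup>2)"
    and \<xi>_indep: "prob_space.indep_vars M (\<lambda>_. S) (\<lambda>(t', e, i, h). \<xi> t' e i h)
                   {(t', e, i, h). e < E \<and> h < H \<and> i \<in> (\<Union>j<N. C j)}"
    and \<xi>_distr: "\<And>t' e i h. (t', e, i, h) \<in> {(t', e, i, h). e < E \<and> h < H \<and> i \<in> (\<Union>j<N. C j)}
                   \<Longrightarrow> distr M S (\<xi> t' e i h) = D i"
begin

sublocale prob_space M by (rule prob)

abbreviation "samples \<equiv> {(t', e, i, h). e < E \<and> h < H \<and> i \<in> (\<Union>j<N. C j)}"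
abbreviation "\<Xi> \<equiv> (\<lambda>(t', e, i, h). \<xi> t' e i h)"
abbreviation "w \<omega> \<equiv> (\<lambda>t' e i h. \<xi> t' e i h \<omega>)"

lemma gF_measurable: "i \<in> (\<Union>j<N. C j) \<Longrightarrow> gF i \<in> borel_measurable borel"
proof -
  assume i: "i \<in> (\<Union>j<N. C j)"
  have "dist (gF i x) (gF i y) \<le> \<bar>L\<bar> * dist x y" for x y
    using gF_lipschitz[OF i, of x y] mult_right_mono[OF abs_ge_self[of L] norm_ge_zero[of "x - y"]]
    by (simp add: dist_norm)
  then have "\<bar>L\<bar>-lipschitz_on UNIV (gF i)" by (intro lipschitz_onI) auto
  then show ?thesis
    by (intro borel_measurable_continuous_onI lipschitz_on_continuous_on)
qed

lemma measurable_sample: "(t', e, i, h) \<in> samples \<Longrightarrow> \<xi> t' e i h \<in> measurable M S"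
proof -
  assume "(t', e, i, h) \<in> samples"
  with \<xi>_indep have "\<Xi> (t', e, i, h) \<in> measurable M S"
    unfolding indep_vars_def by blast
  then show ?thesis by simp
qed

lemma measurable_sample_gen_sigma:
  assumes "P \<subseteq> samples" "(t', e, i, h) \<in> P"
  shows "(\<lambda>\<omega>. w \<omega> t' e i h) \<in> measurable (gen_sigma M S \<Xi> P) S"
proof -
  have "(t', e, i, h) \<in> samples" using assms by blast
  then have "\<Xi> (t', e, i, h) \<in> measurable M S" by (simp add: measurable_sample)
  from measurable_gen_sigma[where X=\<Xi>, OF assms(2) this] show ?thesis by simp
qed

lemma measurable_xc_gen_sigma:
  assumes "j < N" "i \<in> C j" "e < E" "h < H" "P \<subseteq> samples"
    and past: "\<And>t' e' i' h'. drawn_before E H (\<Union>j<N. C j) t e h t' e' i' h' \<Longrightarrow> (t', e', i', h') \<in> P"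
  shows "(\<lambda>\<omega>. xc (w \<omega>) e j i h) \<in> borel_measurable (gen_sigma M S \<Xi> P)"
  using assms(1-4)
  by (intro measurable_mtgc_x[OF gs_meas E_pos H_pos] measurable_sample_gen_sigma[OF assms(5)] past) auto

lemma measurable_grad_noise_gen_sigma:
  assumes "j < N" "i \<in> C j" "e < E" "h < H" "P \<subseteq> samples" "(t, e, i, h) \<in> P"
    and "\<And>t' e' i' h'. drawn_before E H (\<Union>j<N. C j) t e h t' e' i' h' \<Longrightarrow> (t', e', i', h') \<in> P"
  shows "(\<lambda>\<omega>. grad_noise (w \<omega>) e h j i) \<in> borel_measurable (gen_sigma M S \<Xi> P)"
proof -
  have i: "i \<in> (\<Union>j<N. C j)" using assms(1,2) by blast
  note x = measurable_xc_gen_sigma[OF assms(1-5,7)]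
  show ?thesis
    unfolding grad_noise_def
    using borel_measurable_uncurry_compose[OF gs_meas[OF i] x measurable_sample_gen_sigma[OF assms(5,6)]]
      measurable_compose[OF x gF_measurable[OF i]]
    by simp
qed

lemma measurable_xc: "j < N \<Longrightarrow> i \<in> C j \<Longrightarrow> e < E \<Longrightarrow> h < H \<Longrightarrow>
    (\<lambda>\<omega>. xc (w \<omega>) e j i h) \<in> borel_measurable M"
  by (rule measurable_mtgc_x[OF gs_meas E_pos H_pos]) (auto simp: drawn_before_def intro: measurable_sample)

lemma measurable_xg: "j < N \<Longrightarrow> e \<le> E \<Longrightarrow> (\<lambda>\<omega>. xg (w \<omega>) e j) \<in> borel_measurable M"
  by (rule measurable_mtgc_xbj[OF gs_meas E_pos H_pos]) (auto simp: drawn_before_def intro: measurable_sample)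

lemma measurable_xh: "e \<le> E \<Longrightarrow> (\<lambda>\<omega>. xh (w \<omega>) e) \<in> borel_measurable M"
  unfolding mtgc_xhat_def using measurable_xg
  by (intro borel_measurable_scaleR borel_measurable_const borel_measurable_sum) auto

lemma measurable_yg: "j < N \<Longrightarrow> (\<lambda>\<omega>. yg (w \<omega>) j) \<in> borel_measurable M"
proof -
  assume "j < N"
  have "(\<lambda>\<omega>. fst (mtgc_round gs \<gamma> C N E H x0 (w \<omega>) t)) \<in> borel_measurable M \<and>
      (\<forall>j<N. (\<lambda>\<omega>. snd (mtgc_round gs \<gamma> C N E H x0 (w \<omega>) t) j) \<in> borel_measurable M)"
    by (rule measurable_mtgc_round[OF gs_meas E_pos H_pos])
      (use E_pos H_pos in \<open>auto intro: measurable_sample\<close>)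
  with \<open>j < N\<close> show ?thesis unfolding mtgc_y_def by simp
qed

lemma measurable_grad_noise: "j < N \<Longrightarrow> i \<in> C j \<Longrightarrow> e < E \<Longrightarrow> h < H \<Longrightarrow>
    (\<lambda>\<omega>. grad_noise (w \<omega>) e h j i) \<in> borel_measurable M"
proof -
  assume *: "j < N" "i \<in> C j" "e < E" "h < H"
  then have i: "i \<in> (\<Union>j<N. C j)" by blast
  with * have "(t, e, i, h) \<in> samples" by simp
  with * show ?thesis
    unfolding grad_noise_def
    by (intro borel_measurable_diff borel_measurable_uncurry_compose[OF gs_meas[OF i]] measurable_xc
        measurable_compose[OF measurable_xc gF_measurable[OF i]] measurable_sample)
qed

lemma indep_rv_past:
  assumes "(t, e, i, h) \<in> samples"
    and "Z \<in> measurable (gen_sigma M S \<Xi> (samples - {(t, e, i, h)})) Mz"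
  shows "indep_rv Mz Z S (\<xi> t e i h)"
  using indep_rv_gen_sigma[OF \<xi>_indep _ assms(1) _ assms(2)] by simp

lemma nn_integral_grad_noise_squared_le:
  assumes "j < N" "i \<in> C j" "e < E" "h < H"
  shows "(\<integral>\<^sup>+ \<omega>. ennreal ((norm (grad_noise (w \<omega>) e h j i))\<^sup>2) \<partial>M) \<le> ennreal (\<sigma>\<^sup>2)"
proof -
  have i: "i \<in> (\<Union>j<N. C j)" using assms(1,2) by blast
  then have k: "(t, e, i, h) \<in> samples" using assms by simp
  have "(\<lambda>\<omega>. xc (w \<omega>) e j i h) \<in> borel_measurable (gen_sigma M S \<Xi> (samples - {(t, e, i, h)}))"
    using assms by (intro measurable_xc_gen_sigma) (auto simp: drawn_before_def)
  from indep_rv_past[OF k this] have "indep_rv borel (\<lambda>\<omega>. xc (w \<omega>) e j i h) S (\<xi> t e i h)" .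
  from nn_integral_noise_squared_le[OF this \<xi>_distr[OF k] gs_meas[OF i] gF_measurable[OF i] variance[OF i]]
  show ?thesis unfolding grad_noise_def .
qed

lemma integrable_grad_noise_squared:
  assumes "j < N" "i \<in> C j" "e < E" "h < H"
  shows "integrable M (\<lambda>\<omega>. (norm (grad_noise (w \<omega>) e h j i))\<^sup>2)"
proof (rule integrableI_nonneg)
  show "(\<lambda>\<omega>. (norm (grad_noise (w \<omega>) e h j i))\<^sup>2) \<in> borel_measurable M"
    using measurable_grad_noise[OF assms] by measurable
  show "(\<integral>\<^sup>+ \<omega>. ennreal ((norm (grad_noise (w \<omega>) e h j i))\<^sup>2) \<partial>M) < \<infinity>"
    using nn_integral_grad_noise_squared_le[OF assms] by (rule le_less_trans) simp
qed simp

text \<open>Noise terms at different samples are orthogonal: the later one is centred given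
  everything drawn before it, including the earlier one.\<close>
lemma integral_inner_grad_noise_eq_0_ordered:
  assumes 1: "j1 < N" "i1 \<in> C j1" "e1 < E" "h1 < H"
    and 2: "j2 < N" "i2 \<in> C j2" "e2 < E" "h2 < H"
    and ord: "e1 < e2 \<or> (e1 = e2 \<and> h1 \<le> h2)"
    and ne: "(e1, h1, j1, i1) \<noteq> (e2, h2, j2, i2)"
  shows "(\<integral>\<omega>. inner (grad_noise (w \<omega>) e1 h1 j1 i1) (grad_noise (w \<omega>) e2 h2 j2 i2) \<partial>M) = 0"
proof -
  have i1: "i1 \<in> (\<Union>j<N. C j)" and i2: "i2 \<in> (\<Union>j<N. C j)" using 1 2 by blast+
  then have k: "(t, e2, i2, h2) \<in> samples" using 2 by simp
  have "(t, e1, i1, h1) \<noteq> (t, e2, i2, h2)"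
    using ne C_disj[OF \<open>j1 < N\<close> \<open>j2 < N\<close>] \<open>i1 \<in> C j1\<close> \<open>i2 \<in> C j2\<close> by auto
  then have past1: "(\<lambda>\<omega>. grad_noise (w \<omega>) e1 h1 j1 i1)
      \<in> borel_measurable (gen_sigma M S \<Xi> (samples - {(t, e2, i2, h2)}))"
    using 1 i1 ord by (intro measurable_grad_noise_gen_sigma) (auto simp: drawn_before_def)
  have past2: "(\<lambda>\<omega>. xc (w \<omega>) e2 j2 i2 h2) \<in> borel_measurable (gen_sigma M S \<Xi> (samples - {(t, e2, i2, h2)}))"
    using 2 by (intro measurable_xc_gen_sigma) (auto simp: drawn_before_def)
  have "indep_rv (borel \<Otimes>\<^sub>M borel) (\<lambda>\<omega>. (grad_noise (w \<omega>) e1 h1 j1 i1, xc (w \<omega>) e2 j2 i2 h2)) S (\<xi> t e2 i2 h2)"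
    using past1 past2 by (intro indep_rv_past[OF k] measurable_Pair)
  moreover have "(\<integral>\<^sup>+ \<omega>. ennreal ((norm (grad_noise (w \<omega>) e1 h1 j1 i1))\<^sup>2) \<partial>M) < \<infinity>"
    using nn_integral_grad_noise_squared_le[OF 1] by (rule le_less_trans) simp
  ultimately show ?thesis
    using integral_inner_noise_eq_0[OF _ \<xi>_distr[OF k] gs_meas[OF i2] gF_measurable[OF i2]
        variance[OF i2] unbiased[OF i2]]
    by (simp add: grad_noise_def[of _ e2])
qed

lemma integral_inner_grad_noise_eq_0:
  assumes "j1 < N" "i1 \<in> C j1" "e1 < E" "h1 < H" "j2 < N" "i2 \<in> C j2" "e2 < E" "h2 < H"
    and "(e1, h1, j1, i1) \<noteq> (e2, h2, j2, i2)"
  shows "(\<integral>\<omega>. inner (grad_noise (w \<omega>) e1 h1 j1 i1) (grad_noise (w \<omega>) e2 h2 j2 i2) \<partial>M) = 0"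
proof (cases "e1 < e2 \<or> (e1 = e2 \<and> h1 \<le> h2)")
  case True
  with assms show ?thesis by (intro integral_inner_grad_noise_eq_0_ordered)
next
  case False
  with assms have "(\<integral>\<omega>. inner (grad_noise (w \<omega>) e2 h2 j2 i2) (grad_noise (w \<omega>) e1 h1 j1 i1) \<partial>M) = 0"
    by (intro integral_inner_grad_noise_eq_0_ordered) auto
  then show ?thesis by (simp add: inner_commute)
qed

end

lemma avg_minus_mean_avg_eq_sum_Sigma:
  fixes u :: "nat \<Rightarrow> 'c \<Rightarrow> 'a::real_vector"
  assumes "j < N" and "\<And>j. j < N \<Longrightarrow> finite (C j)"
  shows "avg (C j) (u j) - (1 / real N) *\<^sub>R (\<Sum>j'<N. avg (C j') (u j'))
    = (\<Sum>p\<in>(SIGMA j':{..<N}. C j').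
         (((if fst p = j then 1 else 0) - 1 / real N) / real (card (C (fst p)))) *\<^sub>R u (fst p) (snd p))"
proof -
  let ?c = "\<lambda>j'. ((if j' = j then 1 else 0) - 1 / real N) / real (card (C j'))"
  have "(\<Sum>j'<N. \<Sum>i\<in>C j'. ?c j' *\<^sub>R u j' i) = (\<Sum>(j', i)\<in>(SIGMA j':{..<N}. C j'). ?c j' *\<^sub>R u j' i)"
    by (rule sum.Sigma) (auto simp: assms(2))
  then have "(\<Sum>p\<in>(SIGMA j':{..<N}. C j'). ?c (fst p) *\<^sub>R u (fst p) (snd p))
      = (\<Sum>j'<N. ((if j' = j then 1 else 0) - 1 / real N) *\<^sub>R avg (C j') (u j'))"
    by (simp add: split_beta' avg_def scaleR_right.sum divide_inverse)
  also have "\<dots> = (\<Sum>j'<N. (if j' = j then avg (C j') (u j') else 0) - (1 / real N) *\<^sub>R avg (C j') (u j'))"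
    by (intro sum.cong) (auto simp: scaleR_diff_left)
  also have "\<dots> = avg (C j) (u j) - (1 / real N) *\<^sub>R (\<Sum>j'<N. avg (C j') (u j'))"
    using assms(1) by (simp add: sum_subtractf scaleR_right.sum sum.delta)
  finally show ?thesis ..
qed

context mtgc_lipschitz
begin

definition "noise_index e = ({..<e} \<times> {..<H}) \<times> (SIGMA j:{..<N}. C j)"

definition "noise_weight j \<tau> = ((if fst (snd \<tau>) = j then 1 else 0) - 1 / real N) / real (card (C (fst (snd \<tau>))))"

lemma noise_err_eq_sum_grad_noise:
  "noise_err W e = (1 / real N) * (\<Sum>j<N. (norm (\<Sum>\<tau>\<in>noise_index e.
       noise_weight j \<tau> *\<^sub>R grad_noise W (fst (fst \<tau>)) (snd (fst \<tau>)) (fst (snd \<tau>)) (snd (snd \<tau>))))\<^sup>2)"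
  unfolding noise_err_def group_noise_def noise_index_def noise_weight_def
  by (intro arg_cong[where f="\<lambda>x. 1 / real N * x"] sum.cong refl)
     (simp add: avg_minus_mean_avg_eq_sum_Sigma C_fin sum.cartesian_product split_beta')

lemma sum_noise_weight_squared:
  "(1 / real N) * (\<Sum>j<N. \<Sum>\<tau>\<in>noise_index e. (noise_weight j \<tau>)\<^sup>2)
     = real e * real H * ((real N - 1) / (real N)\<^sup>2) * (\<Sum>j<N. 1 / real (card (C j)))"
proof -
  have "(1 / real N) * (\<Sum>j<N. (noise_weight j \<tau>)\<^sup>2)
      = ((real N - 1) / (real N)\<^sup>2) * (1 / real (card (C (fst (snd \<tau>)))))\<^sup>2"
    if "\<tau> \<in> noise_index e" for \<tau>
  proof -
    have "(\<Sum>j<N. (noise_weight j \<tau>)\<^sup>2)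
        = (\<Sum>j<N. ((if fst (snd \<tau>) = j then 1 else 0) - 1 / real N)\<^sup>2) / (real (card (C (fst (snd \<tau>)))))\<^sup>2"
      unfolding noise_weight_def by (simp add: power_divide sum_divide_distrib)
    also have "\<dots> = ((real N - 1) / real N) / (real (card (C (fst (snd \<tau>)))))\<^sup>2"
      using that by (subst sum_indicator_minus_mean_squared) (auto simp: noise_index_def)
    finally show ?thesis by (simp add: power2_eq_square power_divide)
  qed
  then have "(1 / real N) * (\<Sum>j<N. \<Sum>\<tau>\<in>noise_index e. (noise_weight j \<tau>)\<^sup>2)
      = ((real N - 1) / (real N)\<^sup>2) * (\<Sum>\<tau>\<in>noise_index e. (1 / real (card (C (fst (snd \<tau>)))))\<^sup>2)"
    by (subst sum.swap) (simp add: sum_distrib_left)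
  also have "(\<Sum>\<tau>\<in>noise_index e. (1 / real (card (C (fst (snd \<tau>)))))\<^sup>2)
      = real e * real H * (\<Sum>j<N. 1 / real (card (C j)))"
  proof -
    have "(\<Sum>j<N. \<Sum>i\<in>C j. (1 / real (card (C j)))\<^sup>2) = (\<Sum>(j, i)\<in>(SIGMA j:{..<N}. C j). (1 / real (card (C j)))\<^sup>2)"
      by (rule sum.Sigma) (auto simp: C_fin)
    moreover have "(\<Sum>i\<in>C j. (1 / real (card (C j)))\<^sup>2) = 1 / real (card (C j))" if "j < N" for j
      using C_fin[OF that] C_ne[OF that] by (simp add: power2_eq_square card_gt_0_iff)
    ultimately have "(\<Sum>p\<in>(SIGMA j:{..<N}. C j). (1 / real (card (C (fst p))))\<^sup>2) = (\<Sum>j<N. 1 / real (card (C j)))"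
      by (simp add: split_beta')
    then show ?thesis
      unfolding noise_index_def sum.cartesian_product' by (simp add: card_cartesian_product)
  qed
  finally show ?thesis by (simp add: mult_ac)
qed

end

context mtgc_stochastic
begin

lemma expected_noise_err_le:
  assumes "e \<le> E"
  shows "integrable M (\<lambda>\<omega>. noise_err (w \<omega>) e)"
    and "(\<integral>\<omega>. noise_err (w \<omega>) e \<partial>M)
           \<le> real e * real H * ((real N - 1) / (real N)\<^sup>2) * (\<Sum>j<N. 1 / real (card (C j))) * \<sigma>\<^sup>2"
proof -
  let ?T = "noise_index e"
  define f where "f \<tau> \<omega> = grad_noise (w \<omega>) (fst (fst \<tau>)) (snd (fst \<tau>)) (fst (snd \<tau>)) (snd (snd \<tau>))"
    for \<tau> :: "(nat \<times> nat) \<times> nat \<times> 'c" and \<omega>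
  have "finite ?T" unfolding noise_index_def using C_fin by (auto intro!: finite_SigmaI)
  have T: "fst (fst \<tau>) < E \<and> snd (fst \<tau>) < H \<and> fst (snd \<tau>) < N \<and> snd (snd \<tau>) \<in> C (fst (snd \<tau>))"
    if "\<tau> \<in> ?T" for \<tau>
    using that assms unfolding noise_index_def by auto
  have f: "f \<tau> \<in> borel_measurable M" and f_L2: "integrable M (\<lambda>\<omega>. (norm (f \<tau> \<omega>))\<^sup>2)"
    if "\<tau> \<in> ?T" for \<tau>
    unfolding f_def using T[OF that] by (auto intro: measurable_grad_noise integrable_grad_noise_squared)
  have f_var: "(\<integral>\<omega>. (norm (f \<tau> \<omega>))\<^sup>2 \<partial>M) \<le> \<sigma>\<^sup>2" if "\<tau> \<in> ?T" for \<tau>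
  proof -
    have "ennreal (\<integral>\<omega>. (norm (f \<tau> \<omega>))\<^sup>2 \<partial>M) = (\<integral>\<^sup>+ \<omega>. ennreal ((norm (f \<tau> \<omega>))\<^sup>2) \<partial>M)"
      by (rule nn_integral_eq_integral[symmetric, OF f_L2[OF that]]) simp
    also have "\<dots> \<le> ennreal (\<sigma>\<^sup>2)"
      unfolding f_def using T[OF that] by (intro nn_integral_grad_noise_squared_le) auto
    finally show ?thesis by (simp add: ennreal_le_iff)
  qed
  have orth: "(\<integral>\<omega>. inner (f \<tau>1 \<omega>) (f \<tau>2 \<omega>) \<partial>M) = 0" if "\<tau>1 \<in> ?T" "\<tau>2 \<in> ?T" "\<tau>1 \<noteq> \<tau>2" for \<tau>1 \<tau>2
    unfolding f_def using T[OF that(1)] T[OF that(2)] that(3)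
    by (intro integral_inner_grad_noise_eq_0) (auto simp: prod_eq_iff)
  note L2 = integral_norm_sum_orthogonal[OF \<open>finite ?T\<close> f f_L2 orth]
  have noise: "noise_err (w \<omega>) e = (1 / real N) * (\<Sum>j<N. (norm (\<Sum>\<tau>\<in>?T. noise_weight j \<tau> *\<^sub>R f \<tau> \<omega>))\<^sup>2)"
    for \<omega>
    unfolding noise_err_eq_sum_grad_noise f_def ..
  show "integrable M (\<lambda>\<omega>. noise_err (w \<omega>) e)"
    unfolding noise using L2(1) by (intro integrable_mult_right Bochner_Integration.integrable_sum) auto
  have "(\<integral>\<omega>. noise_err (w \<omega>) e \<partial>M)
      = (1 / real N) * (\<Sum>j<N. \<Sum>\<tau>\<in>?T. (noise_weight j \<tau>)\<^sup>2 * (\<integral>\<omega>. (norm (f \<tau> \<omega>))\<^sup>2 \<partial>M))"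
    unfolding noise using L2 by (simp add: Bochner_Integration.integral_sum)
  also have "\<dots> \<le> (1 / real N) * (\<Sum>j<N. \<Sum>\<tau>\<in>?T. (noise_weight j \<tau>)\<^sup>2 * \<sigma>\<^sup>2)"
    by (intro mult_left_mono sum_mono f_var) auto
  also have "\<dots> = ((1 / real N) * (\<Sum>j<N. \<Sum>\<tau>\<in>?T. (noise_weight j \<tau>)\<^sup>2)) * \<sigma>\<^sup>2"
    by (simp add: sum_distrib_right)
  finally show "(\<integral>\<omega>. noise_err (w \<omega>) e \<partial>M)
      \<le> real e * real H * ((real N - 1) / (real N)\<^sup>2) * (\<Sum>j<N. 1 / real (card (C j))) * \<sigma>\<^sup>2"
    unfolding sum_noise_weight_squared .
qed

end

section \<open>Summing the recursion over the group rounds\<close>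

lemma sum_lessThan_real_le: "(\<Sum>e<E. real e) \<le> (real E)\<^sup>2 / 2"
  by (induction E) (simp_all add: power2_eq_square field_simps)

text \<open>Summing over \<open>e\<close> replaces the weights \<open>e\<close> by at most \<open>E\<^sup>2/2\<close>; the resulting term
  \<open>2\<gamma>\<^sup>2E\<^sup>2H\<^sup>2L\<^sup>2 \<Sum> d\<close> on the right is at most \<open>\<Sum> d / 50\<close> and is absorbed into the left.\<close>
lemma sum_le_of_recursive_bound:
  fixes d q y n :: "nat \<Rightarrow> real"
  assumes nonneg: "\<And>e. d e \<ge> 0" "\<And>e. q e \<ge> 0" "\<And>e. y e \<ge> 0" "\<And>e. n e \<ge> 0"
    and small: "(\<gamma> * real E * real H * L)\<^sup>2 \<le> 1 / 100"
    and rec: "\<And>e. e < E \<Longrightarrow> d e \<le> 4 * \<gamma>\<^sup>2 * n e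
                + 4 * \<gamma>\<^sup>2 * (real e * real H * real H) * (\<Sum>e'<e. L\<^sup>2 * q e' + L\<^sup>2 * d e' + y e')"
  shows "(\<Sum>e<E. d e) \<le> 24 * \<gamma>\<^sup>2 * real E ^ 2 * real H ^ 2 * L\<^sup>2 * (\<Sum>e<E. q e)
     + 12 * \<gamma>\<^sup>2 * real E ^ 2 * real H ^ 2 * (\<Sum>e<E. y e) + 5 * \<gamma>\<^sup>2 * (\<Sum>e<E. n e)"
proof -
  define s where "s = (\<Sum>e<E. L\<^sup>2 * q e + L\<^sup>2 * d e + y e)"
  define c where "c = \<gamma>\<^sup>2 * (real E)\<^sup>2 * (real H)\<^sup>2"
  have s_nonneg: "s \<ge> 0" unfolding s_def using nonneg by (intro sum_nonneg) auto
  have "(\<Sum>e<E. d e) \<le> (\<Sum>e<E. 4 * \<gamma>\<^sup>2 * n e + 4 * \<gamma>\<^sup>2 * (real e * real H * real H) * s)"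
  proof (rule sum_mono)
    fix e assume "e \<in> {..<E}"
    then have "(\<Sum>e'<e. L\<^sup>2 * q e' + L\<^sup>2 * d e' + y e') \<le> s"
      unfolding s_def using nonneg by (intro sum_mono2) auto
    then have "4 * \<gamma>\<^sup>2 * (real e * real H * real H) * (\<Sum>e'<e. L\<^sup>2 * q e' + L\<^sup>2 * d e' + y e')
        \<le> 4 * \<gamma>\<^sup>2 * (real e * real H * real H) * s"
      by (rule mult_left_mono) simp
    with rec[of e] \<open>e \<in> {..<E}\<close> show "d e \<le> 4 * \<gamma>\<^sup>2 * n e + 4 * \<gamma>\<^sup>2 * (real e * real H * real H) * s"
      by simp
  qed
  also have "\<dots> = 4 * \<gamma>\<^sup>2 * (\<Sum>e<E. n e) + 4 * \<gamma>\<^sup>2 * (real H)\<^sup>2 * s * (\<Sum>e<E. real e)"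
    by (simp add: sum.distrib sum_distrib_left sum_distrib_right power2_eq_square algebra_simps)
  also have "\<dots> \<le> 4 * \<gamma>\<^sup>2 * (\<Sum>e<E. n e) + 4 * \<gamma>\<^sup>2 * (real H)\<^sup>2 * s * ((real E)\<^sup>2 / 2)"
    using s_nonneg by (intro add_left_mono mult_left_mono sum_lessThan_real_le) auto
  also have "\<dots> = 4 * \<gamma>\<^sup>2 * (\<Sum>e<E. n e) + 2 * c * L\<^sup>2 * (\<Sum>e<E. q e) + 2 * c * (\<Sum>e<E. y e)
      + 2 * (c * L\<^sup>2) * (\<Sum>e<E. d e)"
    by (simp add: s_def c_def sum.distrib sum_distrib_left sum_distrib_right algebra_simps)
  finally have bound: "(\<Sum>e<E. d e) \<le> \<dots>" .
  have "c * L\<^sup>2 \<le> 1 / 100" using small by (simp add: c_def power_mult_distrib)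
  then have "2 * (c * L\<^sup>2) * (\<Sum>e<E. d e) \<le> (1 / 50) * (\<Sum>e<E. d e)"
    using nonneg by (intro mult_right_mono sum_nonneg) auto
  moreover have "0 \<le> c * L\<^sup>2 * (\<Sum>e<E. q e)" "0 \<le> c * (\<Sum>e<E. y e)" "0 \<le> \<gamma>\<^sup>2 * (\<Sum>e<E. n e)"
    using nonneg by (simp_all add: c_def sum_nonneg)
  ultimately have "(\<Sum>e<E. d e) \<le> 24 * c * L\<^sup>2 * (\<Sum>e<E. q e) + 12 * c * (\<Sum>e<E. y e) + 5 * \<gamma>\<^sup>2 * (\<Sum>e<E. n e)"
    using bound by linarith
  then show ?thesis by (simp add: c_def power2_eq_square)
qed

context mtgc_lipschitz
begin

lemma sum_consensus_err_le:
  assumes "(\<gamma> * real E * real H * L)\<^sup>2 \<le> 1 / 100"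
  shows "(\<Sum>e<E. consensus_err W e) \<le> 24 * \<gamma>\<^sup>2 * real E ^ 2 * real H ^ 2 * L\<^sup>2 * (\<Sum>e<E. drift_err W e)
     + 12 * \<gamma>\<^sup>2 * real E ^ 2 * real H ^ 2 * (\<Sum>e<E. tracking_err W e) + 5 * \<gamma>\<^sup>2 * (\<Sum>e<E. noise_err W e)"
  by (rule sum_le_of_recursive_bound[OF _ _ _ _ assms consensus_err_le])
    (auto simp: consensus_err_def drift_err_def tracking_err_def noise_err_def
      intro!: sum_nonneg divide_nonneg_nonneg)

end

section \<open>Taking expectations\<close>

lemma nn_integral_ennreal_sum:
  fixes f :: "'k \<Rightarrow> 'm \<Rightarrow> real"
  assumes "\<And>k. k \<in> K \<Longrightarrow> f k \<in> borel_measurable M" "\<And>k \<omega>. k \<in> K \<Longrightarrow> 0 \<le> f k \<omega>"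
  shows "(\<integral>\<^sup>+ \<omega>. ennreal (\<Sum>k\<in>K. f k \<omega>) \<partial>M) = (\<Sum>k\<in>K. \<integral>\<^sup>+ \<omega>. ennreal (f k \<omega>) \<partial>M)"
proof -
  have "(\<integral>\<^sup>+ \<omega>. ennreal (\<Sum>k\<in>K. f k \<omega>) \<partial>M) = (\<integral>\<^sup>+ \<omega>. (\<Sum>k\<in>K. ennreal (f k \<omega>)) \<partial>M)"
    using assms(2) by (intro nn_integral_cong sum_ennreal[symmetric]) auto
  also have "\<dots> = (\<Sum>k\<in>K. \<integral>\<^sup>+ \<omega>. ennreal (f k \<omega>) \<partial>M)"
    using assms(1) by (intro nn_integral_sum) simp
  finally show ?thesis .
qed

lemma nn_integral_ennreal_cmult:
  fixes f :: "'m \<Rightarrow> real"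
  assumes "f \<in> borel_measurable M" "0 \<le> c"
  shows "(\<integral>\<^sup>+ \<omega>. ennreal (c * f \<omega>) \<partial>M) = ennreal c * (\<integral>\<^sup>+ \<omega>. ennreal (f \<omega>) \<partial>M)"
  using assms by (simp add: ennreal_mult' nn_integral_cmult)

lemma nn_integral_ennreal_linear3:
  fixes f g h :: "'m \<Rightarrow> real"
  assumes "f \<in> borel_measurable M" "g \<in> borel_measurable M" "h \<in> borel_measurable M"
    and "\<And>\<omega>. 0 \<le> f \<omega>" "\<And>\<omega>. 0 \<le> g \<omega>" "\<And>\<omega>. 0 \<le> h \<omega>" "0 \<le> a" "0 \<le> b" "0 \<le> c"
  shows "(\<integral>\<^sup>+ \<omega>. ennreal (a * f \<omega> + b * g \<omega> + c * h \<omega>) \<partial>M)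
    = ennreal a * (\<integral>\<^sup>+ \<omega>. ennreal (f \<omega>) \<partial>M) + ennreal b * (\<integral>\<^sup>+ \<omega>. ennreal (g \<omega>) \<partial>M)
      + ennreal c * (\<integral>\<^sup>+ \<omega>. ennreal (h \<omega>) \<partial>M)"
proof -
  have "(\<integral>\<^sup>+ \<omega>. ennreal (a * f \<omega> + b * g \<omega> + c * h \<omega>) \<partial>M)
      = (\<integral>\<^sup>+ \<omega>. ennreal a * ennreal (f \<omega>) + ennreal b * ennreal (g \<omega>) + ennreal c * ennreal (h \<omega>) \<partial>M)"
  proof (intro nn_integral_cong)
    fix x
    have "0 \<le> a * f x" "0 \<le> b * g x" "0 \<le> c * h x" using assms by simp_all
    then show "ennreal (a * f x + b * g x + c * h x)
        = ennreal a * ennreal (f x) + ennreal b * ennreal (g x) + ennreal c * ennreal (h x)"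
      using assms by (simp add: ennreal_mult)
  qed
  also have "\<dots> = ennreal a * (\<integral>\<^sup>+ \<omega>. ennreal (f \<omega>) \<partial>M) + ennreal b * (\<integral>\<^sup>+ \<omega>. ennreal (g \<omega>) \<partial>M)
      + ennreal c * (\<integral>\<^sup>+ \<omega>. ennreal (h \<omega>) \<partial>M)"
    using assms by (simp add: nn_integral_add nn_integral_cmult)
  finally show ?thesis .
qed

context mtgc_stochastic
begin

lemma measurable_drift_err: "e < E \<Longrightarrow> (\<lambda>\<omega>. drift_err (w \<omega>) e) \<in> borel_measurable M"
  unfolding drift_err_def using measurable_xc measurable_xg
  by (intro borel_measurable_sum borel_measurable_times borel_measurable_const borel_measurable_power
      measurable_compose[OF _ borel_measurable_norm] borel_measurable_diff) auto

lemma measurable_grad_f: "j < N \<Longrightarrow> e \<le> E \<Longrightarrow> (\<lambda>\<omega>. grad_f j (xh (w \<omega>) e)) \<in> borel_measurable M"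
  unfolding grad_f_def
  by (intro borel_measurable_avg measurable_compose[OF measurable_xh gF_measurable]) auto

lemma measurable_tracking_err: "e \<le> E \<Longrightarrow> (\<lambda>\<omega>. tracking_err (w \<omega>) e) \<in> borel_measurable M"
  unfolding tracking_err_def using measurable_yg measurable_grad_f
  by (intro borel_measurable_sum borel_measurable_times borel_measurable_const borel_measurable_power
      measurable_compose[OF _ borel_measurable_norm] borel_measurable_diff borel_measurable_add
      borel_measurable_scaleR) auto

lemma expected_sum_noise_err_le:
  shows "integrable M (\<lambda>\<omega>. \<Sum>e<E. noise_err (w \<omega>) e)"
    and "(\<integral>\<omega>. (\<Sum>e<E. noise_err (w \<omega>) e) \<partial>M)
           \<le> (real E)\<^sup>2 / 2 * real H * ((real N - 1) / (real N)\<^sup>2 * (\<Sum>j<N. 1 / real (card (C j))) * \<sigma>\<^sup>2)"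
proof -
  let ?sc = "((real N - 1) / (real N)\<^sup>2) * (\<Sum>j<N. 1 / real (card (C j))) * \<sigma>\<^sup>2"
  show "integrable M (\<lambda>\<omega>. \<Sum>e<E. noise_err (w \<omega>) e)"
    using expected_noise_err_le(1) by auto
  have "0 \<le> real H * ?sc"
    using N_pos by (intro mult_nonneg_nonneg sum_nonneg divide_nonneg_nonneg) auto
  have "(\<integral>\<omega>. (\<Sum>e<E. noise_err (w \<omega>) e) \<partial>M) \<le> (\<Sum>e<E. real e * (real H * ?sc))"
    using expected_noise_err_le
    by (subst Bochner_Integration.integral_sum) (auto intro!: sum_mono simp: mult.assoc)
  also have "\<dots> = (\<Sum>e<E. real e) * (real H * ?sc)"
    by (simp only: sum_distrib_right)
  also have "\<dots> \<le> (real E)\<^sup>2 / 2 * (real H * ?sc)"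
    by (intro mult_right_mono sum_lessThan_real_le \<open>0 \<le> real H * ?sc\<close>)
  finally show "(\<integral>\<omega>. (\<Sum>e<E. noise_err (w \<omega>) e) \<partial>M) \<le> (real E)\<^sup>2 / 2 * real H * ?sc"
    by (simp only: mult.assoc)
qed

lemma expected_sum_consensus_err_le:
  assumes "(\<gamma> * real E * real H * L)\<^sup>2 \<le> 1 / 100"
  shows "(\<integral>\<^sup>+ \<omega>. ennreal (\<Sum>e<E. consensus_err (w \<omega>) e) \<partial>M)
    \<le> ennreal (24 * \<gamma>\<^sup>2 * real E ^ 2 * real H ^ 2 * L\<^sup>2) * (\<integral>\<^sup>+ \<omega>. ennreal (\<Sum>e<E. drift_err (w \<omega>) e) \<partial>M)
     + ennreal (12 * \<gamma>\<^sup>2 * real E ^ 2 * real H ^ 2) * (\<integral>\<^sup>+ \<omega>. ennreal (\<Sum>e<E. tracking_err (w \<omega>) e) \<partial>M)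
     + ennreal (3 * \<gamma>\<^sup>2 * real E ^ 3 * real H * (real N - 1) / (real N)\<^sup>2
                * (\<Sum>j<N. 1 / real (card (C j))) * \<sigma>\<^sup>2)"
proof -
  let ?a = "24 * \<gamma>\<^sup>2 * real E ^ 2 * real H ^ 2 * L\<^sup>2" and ?b = "12 * \<gamma>\<^sup>2 * real E ^ 2 * real H ^ 2"
  let ?sc = "((real N - 1) / (real N)\<^sup>2) * (\<Sum>j<N. 1 / real (card (C j))) * \<sigma>\<^sup>2"
  define Q where "Q \<omega> = (\<Sum>e<E. drift_err (w \<omega>) e)" for \<omega>
  define Y where "Y \<omega> = (\<Sum>e<E. tracking_err (w \<omega>) e)" for \<omega>
  define Z where "Z \<omega> = (\<Sum>e<E. noise_err (w \<omega>) e)" for \<omega>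
  have nonneg: "0 \<le> Q \<omega>" "0 \<le> Y \<omega>" "0 \<le> Z \<omega>" for \<omega>
    by (auto simp: Q_def Y_def Z_def drift_err_def tracking_err_def noise_err_def
        intro!: sum_nonneg divide_nonneg_nonneg)
  have Z_int: "integrable M Z"
    unfolding Z_def by (rule expected_sum_noise_err_le(1))
  have meas: "Q \<in> borel_measurable M" "Y \<in> borel_measurable M" "Z \<in> borel_measurable M"
    unfolding Q_def Y_def using measurable_drift_err measurable_tracking_err Z_int by auto
  have "5 * \<gamma>\<^sup>2 * (\<integral>\<omega>. Z \<omega> \<partial>M) \<le> 5 * \<gamma>\<^sup>2 * ((real E)\<^sup>2 / 2 * real H * ?sc)"
    unfolding Z_def by (intro mult_left_mono expected_sum_noise_err_le(2)) simp_all
  also have "\<dots> \<le> 3 * \<gamma>\<^sup>2 * real E ^ 3 * real H * ?sc"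
  proof -
    have "(real E)\<^sup>2 \<le> real E ^ 3" using E_pos by (simp add: power_increasing)
    moreover have "0 \<le> \<gamma>\<^sup>2 * real H * ?sc"
      using N_pos by (intro mult_nonneg_nonneg sum_nonneg divide_nonneg_nonneg) auto
    moreover have "0 \<le> (real E)\<^sup>2" by simp
    ultimately have "(\<gamma>\<^sup>2 * real H * ?sc) * (5 / 2 * (real E)\<^sup>2) \<le> (\<gamma>\<^sup>2 * real H * ?sc) * (3 * real E ^ 3)"
      by (intro mult_left_mono) linarith+
    then show ?thesis by (simp add: mult_ac)
  qed
  finally have Z_le: "ennreal (5 * \<gamma>\<^sup>2) * ennreal (\<integral>\<omega>. Z \<omega> \<partial>M) \<le> ennreal (3 * \<gamma>\<^sup>2 * real E ^ 3 * real H * ?sc)"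
    by (simp add: ennreal_mult'[symmetric] ennreal_leI)
  have "(\<integral>\<^sup>+ \<omega>. ennreal (\<Sum>e<E. consensus_err (w \<omega>) e) \<partial>M)
      \<le> (\<integral>\<^sup>+ \<omega>. ennreal (?a * Q \<omega> + ?b * Y \<omega> + 5 * \<gamma>\<^sup>2 * Z \<omega>) \<partial>M)"
    unfolding Q_def Y_def Z_def using sum_consensus_err_le[OF assms]
    by (intro nn_integral_mono ennreal_leI) simp
  also have "\<dots> = ennreal ?a * (\<integral>\<^sup>+ \<omega>. ennreal (Q \<omega>) \<partial>M) + ennreal ?b * (\<integral>\<^sup>+ \<omega>. ennreal (Y \<omega>) \<partial>M)
      + ennreal (5 * \<gamma>\<^sup>2) * ennreal (\<integral>\<omega>. Z \<omega> \<partial>M)"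
    using meas nonneg Z_int by (subst nn_integral_ennreal_linear3) (simp_all add: nn_integral_eq_integral)
  also have "\<dots> \<le> ennreal ?a * (\<integral>\<^sup>+ \<omega>. ennreal (Q \<omega>) \<partial>M) + ennreal ?b * (\<integral>\<^sup>+ \<omega>. ennreal (Y \<omega>) \<partial>M)
      + ennreal (3 * \<gamma>\<^sup>2 * real E ^ 3 * real H * ?sc)"
    using Z_le by (rule add_left_mono)
  finally show ?thesis
    unfolding Q_def Y_def by (simp add: mult_ac)
qed

end

lemma nn_integral_ennreal_sum_cmult:
  fixes f :: "'k \<Rightarrow> 'm \<Rightarrow> real"
  assumes "\<And>k. k \<in> K \<Longrightarrow> f k \<in> borel_measurable M" "\<And>k \<omega>. k \<in> K \<Longrightarrow> 0 \<le> f k \<omega>"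
    and "\<And>k. k \<in> K \<Longrightarrow> 0 \<le> c k"
  shows "(\<integral>\<^sup>+ \<omega>. ennreal (\<Sum>k\<in>K. c k * f k \<omega>) \<partial>M) = (\<Sum>k\<in>K. ennreal (c k) * (\<integral>\<^sup>+ \<omega>. ennreal (f k \<omega>) \<partial>M))"
  using assms by (simp add: nn_integral_ennreal_sum nn_integral_ennreal_cmult)

context mtgc_stochastic
begin

lemma nn_integral_sum_consensus_err:
  "(\<integral>\<^sup>+ \<omega>. ennreal (\<Sum>e<E. consensus_err (w \<omega>) e) \<partial>M)
    = (\<Sum>e<E. \<Sum>j<N. ennreal (1 / real N) * (\<integral>\<^sup>+ \<omega>. ennreal ((norm (xh (w \<omega>) e - xg (w \<omega>) e j))\<^sup>2) \<partial>M))"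
proof -
  have "(\<lambda>\<omega>. (norm (xh (w \<omega>) e - xg (w \<omega>) e j))\<^sup>2) \<in> borel_measurable M" if "e < E" "j < N" for e j
    using measurable_xh[of e] measurable_xg[of j e] that by simp
  then show ?thesis
    unfolding consensus_err_def sum.cartesian_product split_beta'
    by (intro nn_integral_ennreal_sum_cmult) auto
qed

lemma sum_client_steps_eq_sum_Sigma:
  fixes G :: "nat \<Rightarrow> nat \<Rightarrow> 'c \<Rightarrow> nat \<Rightarrow> 'x::comm_monoid_add"
  shows "(\<Sum>e<E. \<Sum>j<N. \<Sum>i\<in>C j. \<Sum>h<H. G e j i h)
    = (\<Sum>(e, (j, i), h)\<in>{..<E} \<times> (SIGMA j:{..<N}. C j) \<times> {..<H}. G e j i h)"
proof -
  have "(\<Sum>j<N. \<Sum>i\<in>C j. \<Sum>h<H. G e j i h) = (\<Sum>(j, i)\<in>(SIGMA j:{..<N}. C j). \<Sum>h<H. G e j i h)" for e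
    using C_fin by (subst sum.Sigma) auto
  then show ?thesis
    by (simp add: sum.cartesian_product split_beta')
qed

lemma nn_integral_sum_drift_err:
  "(\<integral>\<^sup>+ \<omega>. ennreal (\<Sum>e<E. drift_err (w \<omega>) e) \<partial>M)
    = (\<Sum>e<E. \<Sum>j<N. \<Sum>i\<in>C j. \<Sum>h<H. ennreal (1 / (real N * real H * real (card (C j))))
         * (\<integral>\<^sup>+ \<omega>. ennreal ((norm (xg (w \<omega>) e j - xc (w \<omega>) e j i h))\<^sup>2) \<partial>M))"
proof -
  have "(\<lambda>\<omega>. (norm (xg (w \<omega>) e j - xc (w \<omega>) e j i h))\<^sup>2) \<in> borel_measurable M"
    if "e < E" "j < N" "i \<in> C j" "h < H" for e j i h
    using measurable_xc[OF that(2,3,1,4)] measurable_xg[of j e] that by simp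
  then show ?thesis
    unfolding drift_err_def sum_client_steps_eq_sum_Sigma split_beta'
    by (intro nn_integral_ennreal_sum_cmult) auto
qed

lemma nn_integral_sum_tracking_err:
  "(\<integral>\<^sup>+ \<omega>. ennreal (\<Sum>e<E. tracking_err (w \<omega>) e) \<partial>M)
    = (\<Sum>e<E. \<Sum>j<N. ennreal (1 / real N) * (\<integral>\<^sup>+ \<omega>. ennreal ((norm (yg (w \<omega>) j
         + grad_f j (xh (w \<omega>) e) - (1 / real N) *\<^sub>R (\<Sum>j'<N. grad_f j' (xh (w \<omega>) e))))\<^sup>2) \<partial>M))"
proof -
  have "(\<lambda>\<omega>. (norm (yg (w \<omega>) j + grad_f j (xh (w \<omega>) e)
      - (1 / real N) *\<^sub>R (\<Sum>j'<N. grad_f j' (xh (w \<omega>) e))))\<^sup>2) \<in> borel_measurable M"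
    if "e < E" "j < N" for e j
    using measurable_yg[OF that(2)] measurable_grad_f that
    by (intro borel_measurable_power measurable_compose[OF _ borel_measurable_norm] borel_measurable_diff
        borel_measurable_add borel_measurable_scaleR borel_measurable_const borel_measurable_sum) auto
  then show ?thesis
    unfolding tracking_err_def sum.cartesian_product split_beta'
    by (intro nn_integral_ennreal_sum_cmult) auto
qed

end

lemma squared_step_size_bound:
  fixes \<gamma> :: real
  assumes "0 < \<gamma>" "\<gamma> \<le> 1 / (10 * real E * real H * L)"
  shows "(\<gamma> * real E * real H * L)\<^sup>2 \<le> 1 / 100"
proof -
  define x where "x = real E * real H * L"
  have \<gamma>_le: "\<gamma> \<le> 1 / (10 * x)" using assms(2) by (simp add: x_def mult.assoc)
  have "0 < x"
  proof (rule ccontr)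
    assume "\<not> 0 < x"
    then have "1 / (10 * x) \<le> 0" by (simp add: divide_nonpos_nonneg)
    with assms(1) \<gamma>_le show False by linarith
  qed
  then have "0 \<le> \<gamma> * x" "\<gamma> * x \<le> 1 / 10"
    using assms(1) \<gamma>_le by (simp_all add: pos_le_divide_eq field_simps)
  from power_mono[OF this(2,1), of 2] show ?thesis
    by (simp add: x_def power_divide mult.assoc)
qed

theorem lemmaC2p3:
  fixes M :: "'m measure"
    and S :: "'b measure"
    and D :: "'c \<Rightarrow> 'b measure"
    and C :: "nat \<Rightarrow> 'c set"
    and N E H :: nat
    and Fs :: "'c \<Rightarrow> 'a::euclidean_space \<Rightarrow> 'b \<Rightarrow> real"
    and gs :: "'c \<Rightarrow> 'a \<Rightarrow> 'b \<Rightarrow> 'a"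
    and gF :: "'c \<Rightarrow> 'a \<Rightarrow> 'a"
    and L \<sigma> \<gamma> :: real
    and x0 :: 'a
    and \<xi> :: "nat \<Rightarrow> nat \<Rightarrow> 'c \<Rightarrow> nat \<Rightarrow> 'm \<Rightarrow> 'b"
    and t :: nat
  defines "Cl \<equiv> (\<Union>j<N. C j)"
    and "I \<equiv> {(t', e, i, h). e < E \<and> h < H \<and> i \<in> (\<Union>j<N. C j)}"
    and "w \<equiv> (\<lambda>\<omega> t' e i h. \<xi> t' e i h \<omega>)"
    and "gf \<equiv> (\<lambda>j x. avg (C j) (\<lambda>i. gF i x))"
  assumes prob: "prob_space M"
    and N_pos: "N \<ge> 1"
    and C_fin: "\<And>j. j < N \<Longrightarrow> finite (C j)"
    and C_ne: "\<And>j. j < N \<Longrightarrow> C j \<noteq> {}"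
    and C_disj: "\<And>j j'. j < N \<Longrightarrow> j' < N \<Longrightarrow> j \<noteq> j' \<Longrightarrow> C j \<inter> C j' = {}"
    and E_pos: "E \<ge> 1" and H_pos: "H \<ge> 1"
    and \<gamma>_pos: "\<gamma> > 0"
    and \<gamma>_le: "\<gamma> \<le> 1 / (10 * real E * real H * L)"
    \<comment> \<open>client distributions and stochastic losses / gradients\<close>
    and D_sets: "\<And>i. i \<in> Cl \<Longrightarrow> sets (D i) = sets S"
    and D_prob: "\<And>i. i \<in> Cl \<Longrightarrow> prob_space (D i)"
    and gs_meas: "\<And>i. i \<in> Cl \<Longrightarrow> (\<lambda>(x, s). gs i x s) \<in> borel_measurable (borel \<Otimes>\<^sub>M S)"
    and Fs_grad: "\<And>i x s. i \<in> Cl \<Longrightarrow> s \<in> space S \<Longrightarrow>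
                   ((\<lambda>y. Fs i y s) has_derivative (\<lambda>v. inner (gs i x s) v)) (at x)"
    and Fs_int: "\<And>i x. i \<in> Cl \<Longrightarrow> integrable (D i) (Fs i x)"
    and F_grad: "\<And>i x. i \<in> Cl \<Longrightarrow>
                   ((\<lambda>y. \<integral>s. Fs i y s \<partial>D i) has_derivative (\<lambda>v. inner (gF i x) v)) (at x)"
    \<comment> \<open>(A1)\<close>
    and A1: "\<And>i x y. i \<in> Cl \<Longrightarrow> norm (gF i x - gF i y) \<le> L * norm (x - y)"
    \<comment> \<open>(A2)\<close>
    and A2_unb: "\<And>i x. i \<in> Cl \<Longrightarrow> integrable (D i) (gs i x) \<and> (\<integral>s. gs i x s \<partial>D i) = gF i x"
    and A2_var: "\<And>i x. i \<in> Cl \<Longrightarrow>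
                   (\<integral>\<^sup>+ s. ennreal ((norm (gs i x s - gF i x))\<^sup>2) \<partial>D i) \<le> ennreal (\<sigma>\<^sup>2)"
    \<comment> \<open>samples: fresh, mutually independent, xi_{i,h}^{t,e} ~ D_i\<close>
    and \<xi>_indep: "prob_space.indep_vars M (\<lambda>_. S) (\<lambda>(t', e, i, h). \<xi> t' e i h) I"
    and \<xi>_distr: "\<And>t' e i h. (t', e, i, h) \<in> I \<Longrightarrow> distr M S (\<xi> t' e i h) = D i"
  shows
   "(\<Sum>e<E. \<Sum>j<N. ennreal (1 / real N) *
       (\<integral>\<^sup>+ \<omega>. ennreal ((norm (mtgc_xhat gs \<gamma> C N E H x0 (w \<omega>) t e
                                     - mtgc_xbj gs \<gamma> C N E H x0 (w \<omega>) t e j))\<^sup>2) \<partial>M))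
    \<le> ennreal (24 * \<gamma>\<^sup>2 * real E ^ 2 * real H ^ 2 * L\<^sup>2) *
       (\<Sum>e<E. \<Sum>j<N. \<Sum>i\<in>C j. \<Sum>h<H.
          ennreal (1 / (real N * real H * real (card (C j)))) *
          (\<integral>\<^sup>+ \<omega>. ennreal ((norm (mtgc_xbj gs \<gamma> C N E H x0 (w \<omega>) t e j
                                        - mtgc_x gs \<gamma> C N E H x0 (w \<omega>) t e j i h))\<^sup>2) \<partial>M))
     + ennreal (12 * \<gamma>\<^sup>2 * real E ^ 2 * real H ^ 2) *
       (\<Sum>e<E. \<Sum>j<N. ennreal (1 / real N) *
          (\<integral>\<^sup>+ \<omega>. ennreal ((norm (mtgc_y gs \<gamma> C N E H x0 (w \<omega>) t j
                 + gf j (mtgc_xhat gs \<gamma> C N E H x0 (w \<omega>) t e)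
                 - (1 / real N) *\<^sub>R (\<Sum>j'<N. gf j' (mtgc_xhat gs \<gamma> C N E H x0 (w \<omega>) t e))))\<^sup>2) \<partial>M))
     + ennreal (3 * \<gamma>\<^sup>2 * real E ^ 3 * real H * (real N - 1) / (real N)\<^sup>2
                * (\<Sum>j<N. 1 / real (card (C j))) * \<sigma>\<^sup>2)"
proof -
  note hyps = gs_meas[unfolded Cl_def] A1[unfolded Cl_def] A2_unb[unfolded Cl_def]
    A2_var[unfolded Cl_def] \<xi>_indep[unfolded I_def] \<xi>_distr[unfolded I_def]
  interpret mtgc_stochastic gs gF C N E H \<gamma> L x0 t M S D \<sigma> \<xi>
    by (intro mtgc_stochastic.intro mtgc_lipschitz.intro mtgc_stochastic_axioms.intro)
      (fact prob N_pos C_fin C_ne C_disj E_pos H_pos hyps)+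
  have "(\<gamma> * real E * real H * L)\<^sup>2 \<le> 1 / 100"
    using \<gamma>_pos \<gamma>_le by (rule squared_step_size_bound)
  from expected_sum_consensus_err_le[OF this] show ?thesis
    unfolding nn_integral_sum_consensus_err nn_integral_sum_drift_err nn_integral_sum_tracking_err
      w_def gf_def grad_f_def .
qed

end
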